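(* In the QiSVD setup, assume (E1) and (E2) hold. Then $$\|A-\hat U\hat U^TA\|_F^2<\|A-A_k\|_F^2+5\omega\|A\|_F^2 .$$
   Context: QiSVD setup. Let $A\in\mathbb{R}^{m\times n}$ be a nonzero matrix of rank $r$. For a nonzero matrix $B$, $\sigma_{\min}(B)$ denotes its smallest nonzero singular value, and $\kappa=\|A\|/\sigma_{\min}(A)$, where $\|\cdot\|$ is the spectral norm and $\|\cdot\|_F$ the Frobenius norm. Let $k$ be an integer with $1\le k\le r$, and let $\epsilon,\delta\in(0,1)$. Put $$\omega=\frac{\|A\|^2\epsilon^2}{196(\|A\|_F\kappa+\|A\|)^2},$$ fix $\theta\in\Big(0,\frac{\omega\|A\|^2}{(4k+3+2\omega)\kappa^2\|A\|_F^2}\Big]$, and let $p=\lceil 1/(\theta^2\delta)\rceil$. Sample column indices $j_1,\dots,j_p$ i.i.d. from $[n]$ with $\Pr(j)=P_j=\|A_{:,j}\|^2/\|A\|_F^2$. Let $S\in\mathbb{R}^{m\times p}$ have columns $S_{:,t}=A_{:,j_t}/\sqrt{pP_{j_t}}$. Then sample row indices $i_1,\dots,i_p$ i.i.d. from $[m]$ with $\Pr(i)=P'_i=\|S_{i,:}\|^2/\|S\|_F^2$. Let $W\in\mathbb{R}^{p\times p}$ have rows $W_{t,:}=S_{i_t,:}/\sqrt{pP'_{i_t}}$. Let $\sigma_1\ge\dots\ge\sigma_k$ be the $k$ largest singular values of $W$, and let $v_1,\dots,v_k$ be corresponding orthonormal right singular vectors. Set $V=(v_1,\dots,v_k)\in\mathbb{R}^{p\times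 k}$, $\Sigma=\mathrm{diag}(\sigma_1,\dots,\sigma_k)$, and, when $\sigma_k>0$, $$\hat U=SV\Sigma^{-1}\in\mathbb{R}^{m\times k}.$$ The events used are - (E1): $\|AA^T-SS^T\|_F\le\theta\|A\|_F^2$; - (E2): $\|S^TS-W^TW\|_F\le\theta\|S\|_F^2$. By the column/row sampling lemmas and the choice of $p$, each of these events holds with probability at least $1-\delta$. Let $A=U_A\Sigma_AV_A^T$ be a singular value decomposition of $A$ with $U_A\in\mathbb{R}^{m\times r}$, $V_A\in\mathbb{R}^{n\times r}$ orthonormal and $\Sigma_A=\mathrm{diag}(\sigma_1(A),\dots,\sigma_r(A))$ with $\sigma_1(A)\ge\dots\ge\sigma_r(A)>0$. Then $$A_k=\sum_{i=1}^k\sigma_i(A)\,(U_A)_{:,i}\,(V_A)_{:,i}^T .$$ *)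

theory Defs
  imports Complex_Main "Jordan_Normal_Form.Char_Poly"
begin

definition vnorm :: "real vec \<Rightarrow> real" where
  "vnorm x = sqrt (\<Sum>i<dim_vec x. (x $ i)^2)"

definition fro_norm :: "real mat \<Rightarrow> real" where
  "fro_norm B = sqrt (\<Sum>i<dim_row B. \<Sum>j<dim_col B. (B $$ (i,j))^2)"

definition spec_norm :: "real mat \<Rightarrow> real" where
  "spec_norm B = Sup {vnorm (B *\<^sub>v x) | x. x \<in> carrier_vec (dim_col B) \<and> vnorm x = 1}"

definition sigma_min :: "real mat \<Rightarrow> real" where
  "sigma_min B = sqrt (Min {e. e \<noteq> 0 \<and> eigenvalue (transpose_mat B * B) e})"

definition cond_num :: "real mat \<Rightarrow> real" where
  "cond_num B = spec_norm B / sigma_min B"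

definition col_prob :: "real mat \<Rightarrow> nat \<Rightarrow> real" where
  "col_prob B j = (\<Sum>a<dim_row B. (B $$ (a,j))^2) / (fro_norm B)^2"

definition row_prob :: "real mat \<Rightarrow> nat \<Rightarrow> real" where
  "row_prob B i = (\<Sum>c<dim_col B. (B $$ (i,c))^2) / (fro_norm B)^2"

definition samp_cols :: "real mat \<Rightarrow> nat \<Rightarrow> (nat \<Rightarrow> nat) \<Rightarrow> real mat" where
  "samp_cols A p j = mat (dim_row A) p (\<lambda>(a,t). A $$ (a, j t) / sqrt (real p * col_prob A (j t)))"

definition samp_rows :: "real mat \<Rightarrow> nat \<Rightarrow> (nat \<Rightarrow> nat) \<Rightarrow> real mat" where
  "samp_rows S p i = mat p (dim_col S) (\<lambda>(t,c). S $$ (i t, c) / sqrt (real p * row_prob S (i t)))"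

end

theory Submission
  imports Defs
begin

(* (E1) and (E2) bound A A^T - S S^T and S^T S - W^T W by tau = theta ||A||_F^2 in Frobenius
   norm, hence in every quadratic form; the sampling enters only through ||S||_F = ||A||_F.
   For y in R^k the vectors S^T U_k Sigma_k^-1 y are nearly isometric images of y, so by
   Courant-Fischer and Ky Fan the k largest singular values s_l of W satisfy
   s_(k-1)^2 >= sigma_min(A)^2 / 2 and sum s_l^2 >= sum_(l<k) sigma_l(A)^2 - O(k tau).
   Hence Uhat is a near-isometry, ||Uhat y||^2 <= (1 + eta) ||y||^2 with eta = tau / s_(k-1)^2,
   which gives ||A - Uhat Uhat^T A||_F^2 <= ||A||_F^2 - (1 - eta) ||Uhat^T A||_F^2, while
   ||Uhat^T A||_F^2 = sum_l uhat_l^T A A^T uhat_l >= sum_(l<k) s_l^2 - O(k tau).  Altogether the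
   residual exceeds ||A - A_k||_F^2 = sum_(l>=k) sigma_l(A)^2 by at most
   10 tau / sigma_min(A)^2 * ||A||_F^2, and the choice of theta makes this less than
   5 omega ||A||_F^2. *)

section \<open>Finite sums and real vectors\<close>

lemma sum_mult_sq_le:
  fixes f g :: "'a \<Rightarrow> real"
  shows "(\<Sum>i\<in>I. f i * g i)^2 \<le> (\<Sum>i\<in>I. (f i)^2) * (\<Sum>i\<in>I. (g i)^2)"
proof -
  have expand: "(f i * g j - f j * g i)^2
      = (f i)^2 * (g j)^2 + (f j)^2 * (g i)^2 - 2 * ((f i * g i) * (f j * g j))" for i j
    by (simp add: power2_eq_square algebra_simps)
  have "0 \<le> (\<Sum>i\<in>I. \<Sum>j\<in>I. (f i * g j - f j * g i)^2)" by (intro sum_nonneg) auto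
  also have "\<dots> = (\<Sum>i\<in>I. \<Sum>j\<in>I. (f i)^2 * (g j)^2) + (\<Sum>i\<in>I. \<Sum>j\<in>I. (f j)^2 * (g i)^2)
      - 2 * (\<Sum>i\<in>I. \<Sum>j\<in>I. (f i * g i) * (f j * g j))"
    unfolding expand by (simp add: sum_subtractf sum.distrib sum_distrib_left)
  also have "(\<Sum>i\<in>I. \<Sum>j\<in>I. (f i)^2 * (g j)^2) = (\<Sum>i\<in>I. (f i)^2) * (\<Sum>i\<in>I. (g i)^2)"
    by (simp add: sum_product)
  also have "(\<Sum>i\<in>I. \<Sum>j\<in>I. (f j)^2 * (g i)^2) = (\<Sum>i\<in>I. (f i)^2) * (\<Sum>i\<in>I. (g i)^2)"
    by (subst sum.swap) (simp add: sum_product)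
  also have "(\<Sum>i\<in>I. \<Sum>j\<in>I. (f i * g i) * (f j * g j)) = (\<Sum>i\<in>I. f i * g i)^2"
    by (simp add: sum_product power2_eq_square)
  finally show ?thesis by simp
qed

lemma power2_le_mult_imp_le:
  fixes x c :: real
  assumes "x^2 \<le> c * x" and "0 \<le> c"
  shows "x \<le> c"
  using assms by (cases "x > 0") (auto simp: power2_eq_square)

lemma sum_if_less_eq:
  fixes g :: "nat \<Rightarrow> real"
  assumes "k \<le> r"
  shows "(\<Sum>a<r. if a < k then g a else 0) = (\<Sum>a<k. g a)"
proof -
  have "(\<Sum>a<r. if a < k then g a else 0) = (\<Sum>a\<in>{a\<in>{..<r}. a < k}. g a)"
    by (subst sum.inter_filter) auto
  also have "{a\<in>{..<r}. a < k} = {..<k}" using assms by auto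
  finally show ?thesis .
qed

lemma sum_lessThan_split:
  fixes f :: "nat \<Rightarrow> real"
  assumes "k \<le> r"
  shows "(\<Sum>l<r. f l) = (\<Sum>l<k. f l) + (\<Sum>l\<in>{k..<r}. f l)"
  using assms by (metis lessThan_atLeast0 sum.atLeastLessThan_concat zero_le)

lemma sum_unit_vec_sq:
  fixes g :: "nat \<Rightarrow> real"
  assumes "a < k"
  shows "(\<Sum>l<k. g l * (unit_vec k a $ l)^2) = g a"
proof -
  have "(\<Sum>l<k. g l * (unit_vec k a $ l)^2) = (\<Sum>l<k. if l = a then g a else 0)"
    using assms by (intro sum.cong) auto
  also have "\<dots> = g a" using assms by simp
  finally show ?thesis .
qed

lemma sum_mult_le_top_sum:
  fixes d c :: "nat \<Rightarrow> real"
  assumes kp: "k \<le> p" and k1: "1 \<le> k"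
    and d_nonneg: "\<forall>l<p. 0 \<le> d l" and d_dec: "\<forall>a b. a \<le> b \<longrightarrow> b < p \<longrightarrow> d b \<le> d a"
    and c_bounds: "\<forall>l<p. 0 \<le> c l \<and> c l \<le> g" and c_sum: "(\<Sum>l<p. c l) \<le> real k * g"
  shows "(\<Sum>l<p. d l * c l) \<le> g * (\<Sum>l<k. d l)"
proof -
  define t where "t = d (k - 1)"
  have tail: "\<forall>l\<in>{k..<p}. d l \<le> t" using d_dec k1 unfolding t_def by auto
  have head: "\<forall>l<k. t \<le> d l" using d_dec k1 kp unfolding t_def by auto
  have t_nonneg: "0 \<le> t" using d_nonneg k1 kp unfolding t_def by auto
  have "(\<Sum>l\<in>{k..<p}. d l * c l) \<le> (\<Sum>l\<in>{k..<p}. t * c l)"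
    using tail c_bounds by (intro sum_mono mult_right_mono) auto
  also have "\<dots> = t * ((\<Sum>l<p. c l) - (\<Sum>l<k. c l))"
    using sum_lessThan_split[OF kp, of c] by (simp add: sum_distrib_left)
  also have "\<dots> \<le> t * (real k * g - (\<Sum>l<k. c l))"
    using c_sum t_nonneg by (intro mult_left_mono) auto
  also have "\<dots> = (\<Sum>l<k. t * (g - c l))"
    by (simp add: sum_distrib_left sum_subtractf algebra_simps)
  also have "\<dots> \<le> (\<Sum>l<k. d l * (g - c l))"
    using head c_bounds kp by (intro sum_mono mult_right_mono) auto
  finally have "(\<Sum>l\<in>{k..<p}. d l * c l) \<le> (\<Sum>l<k. d l * (g - c l))" .
  hence "(\<Sum>l<p. d l * c l) \<le> (\<Sum>l<k. d l * c l) + (\<Sum>l<k. d l * (g - c l))"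
    using sum_lessThan_split[OF kp, of "\<lambda>l. d l * c l"] by simp
  also have "\<dots> = g * (\<Sum>l<k. d l)"
    by (simp add: sum.distrib[symmetric] sum_distrib_left algebra_simps)
  finally show ?thesis .
qed

lemma scalar_prod_self_nonneg: "0 \<le> (v :: real vec) \<bullet> v"
  using conjugate_square_ge_0_vec[of v] by simp

lemma scalar_prod_self_pos:
  "(v :: real vec) \<in> carrier_vec n \<Longrightarrow> v \<noteq> 0\<^sub>v n \<Longrightarrow> 0 < v \<bullet> v"
  using conjugate_square_greater_0_vec[of v n] by simp

lemma scalar_prod_self_eq_sum_sq: "(v :: real vec) \<bullet> v = (\<Sum>i<dim_vec v. (v $ i)^2)"
  unfolding scalar_prod_def by (simp add: power2_eq_square atLeast0LessThan)

lemma scalar_prod_sq_le: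
  fixes x y :: "real vec"
  assumes "x \<in> carrier_vec n" "y \<in> carrier_vec n"
  shows "(x \<bullet> y)^2 \<le> (x \<bullet> x) * (y \<bullet> y)"
  using assms sum_mult_sq_le[of "\<lambda>i. x $ i" "\<lambda>i. y $ i" "{0..<n}"]
  unfolding scalar_prod_def by (simp add: power2_eq_square)

lemma scalar_prod_abs_le_amgm:
  fixes x y :: "real vec"
  assumes x: "x \<in> carrier_vec n" and y: "y \<in> carrier_vec n" and t: "0 < t"
  shows "2 * \<bar>x \<bullet> y\<bar> \<le> t * (x \<bullet> x) + (y \<bullet> y) / t"
proof -
  let ?a = "sqrt (x \<bullet> x)" and ?b = "sqrt (y \<bullet> y)"
  have "\<bar>x \<bullet> y\<bar> \<le> ?a * ?b"
    using scalar_prod_sq_le[OF x y] scalar_prod_self_nonneg[of x] scalar_prod_self_nonneg[of y]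
    by (metis real_sqrt_abs real_sqrt_le_mono real_sqrt_mult)
  moreover have "0 \<le> (t * ?a - ?b)^2 / t" using t by simp
  moreover have "(t * ?a - ?b)^2 / t = t * ?a^2 - 2 * (?a * ?b) + ?b^2 / t"
    using t by (simp add: power2_eq_square field_simps)
  ultimately show ?thesis
    using scalar_prod_self_nonneg[of x] scalar_prod_self_nonneg[of y] by simp
qed

lemma scalar_prod_diff_self:
  fixes x z :: "real vec"
  assumes "x \<in> carrier_vec n" "z \<in> carrier_vec n"
  shows "(x - z) \<bullet> (x - z) = x \<bullet> x - 2 * (x \<bullet> z) + z \<bullet> z"
  using assms by (simp add: minus_scalar_prod_distrib[of _ n] scalar_prod_minus_distrib[of _ n]
      comm_scalar_prod[of z n x])

lemma scalar_prod_add_self: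
  fixes x z :: "real vec"
  assumes "x \<in> carrier_vec n" "z \<in> carrier_vec n"
  shows "(x + z) \<bullet> (x + z) = x \<bullet> x + 2 * (x \<bullet> z) + z \<bullet> z"
  using assms by (simp add: add_scalar_prod_distrib[of _ n] scalar_prod_add_distrib[of _ n]
      comm_scalar_prod[of z n x])

lemma exists_nonzero_orthogonal:
  fixes z :: "nat \<Rightarrow> real vec"
  assumes k1: "1 \<le> k" and z: "\<forall>l<k-1. z l \<in> carrier_vec k"
  shows "\<exists>y. y \<in> carrier_vec k \<and> y \<noteq> 0\<^sub>v k \<and> (\<forall>l<k-1. z l \<bullet> y = 0)"
proof -
  define c where "c = (\<lambda>l. if l < k - 1 then z l else 0\<^sub>v k)"
  define B where "B = mat\<^sub>r k k (\<lambda>i. if i = k - 1 then 0\<^sub>v k else c i)"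
  have B: "B \<in> carrier_mat k k" unfolding B_def by auto
  have "c \<in> {0..<k} \<rightarrow> carrier_vec k" using z unfolding c_def by auto
  hence "det B = 0" unfolding B_def using k1 by (intro det_row_0) auto
  then obtain y where y: "y \<in> carrier_vec k" "y \<noteq> 0\<^sub>v k" "B *\<^sub>v y = 0\<^sub>v k"
    using det_0_iff_vec_prod_zero[OF B] by auto
  have "z l \<bullet> y = 0" if l: "l < k - 1" for l
  proof -
    have "(B *\<^sub>v y) $ l = 0" using y(3) l by simp
    moreover have "row B l = z l" unfolding B_def c_def using l z by auto
    ultimately show ?thesis using l B by simp
  qed
  thus ?thesis using y by auto
qed

section \<open>Matrices and the Frobenius norm\<close>

lemma mat_diag_mult_vec:
  assumes "v \<in> carrier_vec n"
  shows "mat_diag n f *\<^sub>v v = vec n (\<lambda>i. f i * v $ i)"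
proof (rule eq_vecI)
  fix i assume "i < dim_vec (vec n (\<lambda>i. f i * v $ i))"
  hence i: "i < n" by simp
  have "row (mat_diag n f) i \<bullet> v = (\<Sum>j\<in>{0..<n}. (if i = j then f j * v $ j else 0))"
    unfolding scalar_prod_def mat_diag_def using assms i by (intro sum.cong) auto
  also have "\<dots> = f i * v $ i" using i by simp
  finally show "(mat_diag n f *\<^sub>v v) $ i = vec n (\<lambda>i. f i * v $ i) $ i"
    using i by (simp add: mat_diag_def)
qed (simp add: mat_diag_def)

lemma dim_mat_diag [simp]: "dim_row (mat_diag n f) = n" "dim_col (mat_diag n f) = n"
  by (simp_all add: mat_diag_def)

lemma transpose_mat_diag [simp]: "transpose_mat (mat_diag n f) = mat_diag n f"
  by (intro eq_matI) (auto simp: mat_diag_def)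

lemma col_minus_mat:
  fixes A B :: "real mat"
  assumes "A \<in> carrier_mat nr nc" "B \<in> carrier_mat nr nc" "j < nc"
  shows "col (A - B) j = col A j - col B j"
  by (rule eq_vecI) (use assms in \<open>auto simp: carrier_matD\<close>)

lemma col_eq_mult_unit_vec:
  fixes U :: "real mat"
  assumes "U \<in> carrier_mat d q" and "a < q"
  shows "col U a = U *\<^sub>v unit_vec q a"
proof -
  have "col U a = col (U * 1\<^sub>m q) a" using assms by simp
  also have "\<dots> = U *\<^sub>v col (1\<^sub>m q) a" using assms by (intro col_mult2) auto
  finally show ?thesis using assms by simp
qed

lemma quad_form_minus:
  fixes P Q :: "real mat"
  assumes "P \<in> carrier_mat n n" "Q \<in> carrier_mat n n" "x \<in> carrier_vec n"
  shows "x \<bullet> ((P - Q) *\<^sub>v x) = x \<bullet> (P *\<^sub>v x) - x \<bullet> (Q *\<^sub>v x)"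
  using assms by (simp add: minus_mult_distrib_mat_vec scalar_prod_minus_distrib[of _ n])

lemma quad_form_gram:
  fixes S :: "real mat"
  assumes S: "S \<in> carrier_mat m p" and x: "x \<in> carrier_vec p"
  shows "x \<bullet> ((transpose_mat S * S) *\<^sub>v x) = (S *\<^sub>v x) \<bullet> (S *\<^sub>v x)"
  using S x transpose_vec_mult_scalar[of "transpose_mat S" p m "S *\<^sub>v x" x]
  by (simp add: assoc_mult_mat_vec[of _ p m _ p])

lemma quad_form_gram_transpose:
  fixes S :: "real mat"
  assumes "S \<in> carrier_mat m p" and "w \<in> carrier_vec m"
  shows "w \<bullet> ((S * transpose_mat S) *\<^sub>v w) = (transpose_mat S *\<^sub>v w) \<bullet> (transpose_mat S *\<^sub>v w)"
  using quad_form_gram[of "transpose_mat S" p m w] assms by simp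

lemma fro_norm_nonneg: "0 \<le> fro_norm B"
  unfolding fro_norm_def by (simp add: sum_nonneg)

lemma fro_norm_sq: "(fro_norm B)^2 = (\<Sum>i<dim_row B. \<Sum>j<dim_col B. (B $$ (i,j))^2)"
  unfolding fro_norm_def by (simp add: sum_nonneg)

lemma fro_norm_sq_rows:
  assumes "B \<in> carrier_mat d e"
  shows "(fro_norm B)^2 = (\<Sum>i<d. row B i \<bullet> row B i)"
  using assms unfolding fro_norm_sq by (auto simp: scalar_prod_self_eq_sum_sq intro!: sum.cong)

lemma fro_norm_sq_cols:
  assumes "B \<in> carrier_mat d e"
  shows "(fro_norm B)^2 = (\<Sum>j<e. col B j \<bullet> col B j)"
  using assms unfolding fro_norm_sq
  by (subst sum.swap) (auto simp: scalar_prod_self_eq_sum_sq intro!: sum.cong)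

lemma mult_vec_sq_le_fro_norm:
  fixes B :: "real mat"
  assumes B: "B \<in> carrier_mat d e" and x: "x \<in> carrier_vec e"
  shows "(B *\<^sub>v x) \<bullet> (B *\<^sub>v x) \<le> (fro_norm B)^2 * (x \<bullet> x)"
proof -
  have "(B *\<^sub>v x) \<bullet> (B *\<^sub>v x) = (\<Sum>i<d. (row B i \<bullet> x)^2)"
    using B by (simp add: scalar_prod_self_eq_sum_sq)
  also have "\<dots> \<le> (\<Sum>i<d. (row B i \<bullet> row B i) * (x \<bullet> x))"
    using B x by (intro sum_mono scalar_prod_sq_le[of _ e]) auto
  also have "\<dots> = (fro_norm B)^2 * (x \<bullet> x)"
    using fro_norm_sq_rows[OF B] by (simp add: sum_distrib_right)
  finally show ?thesis .
qed

lemma quad_form_abs_le_fro_norm: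
  fixes B :: "real mat"
  assumes B: "B \<in> carrier_mat n n" and x: "x \<in> carrier_vec n"
  shows "\<bar>x \<bullet> (B *\<^sub>v x)\<bar> \<le> fro_norm B * (x \<bullet> x)"
proof (rule power2_le_imp_le)
  have "\<bar>x \<bullet> (B *\<^sub>v x)\<bar>^2 \<le> (x \<bullet> x) * ((B *\<^sub>v x) \<bullet> (B *\<^sub>v x))"
    using B x scalar_prod_sq_le[of x n "B *\<^sub>v x"] by simp
  also have "\<dots> \<le> (x \<bullet> x) * ((fro_norm B)^2 * (x \<bullet> x))"
    using mult_vec_sq_le_fro_norm[OF B x] scalar_prod_self_nonneg[of x] by (intro mult_left_mono)
  finally show "\<bar>x \<bullet> (B *\<^sub>v x)\<bar>^2 \<le> (fro_norm B * (x \<bullet> x))^2"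
    by (simp add: power_mult_distrib power2_eq_square mult_ac)
qed (simp add: fro_norm_nonneg scalar_prod_self_nonneg)

lemma fro_norm_sq_transpose_mult:
  fixes U A :: "real mat"
  assumes U: "U \<in> carrier_mat m k" and A: "A \<in> carrier_mat m n"
  shows "(fro_norm (transpose_mat U * A))^2
    = (\<Sum>l<k. col U l \<bullet> ((A * transpose_mat A) *\<^sub>v col U l))"
proof -
  have "row (transpose_mat U * A) l \<bullet> row (transpose_mat U * A) l
      = col U l \<bullet> ((A * transpose_mat A) *\<^sub>v col U l)" if l: "l < k" for l
  proof -
    have "row (transpose_mat U * A) l = transpose_mat A *\<^sub>v col U l"
      using U A l by (intro eq_vecI) (auto simp: comm_scalar_prod[of _ m])
    thus ?thesis using quad_form_gram_transpose[OF A, of "col U l"] U l by simp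
  qed
  thus ?thesis using U A by (simp add: fro_norm_sq_rows[of _ k n])
qed

section \<open>Orthonormal columns and singular value decompositions\<close>

lemma orthonormal_mult_vec_scalar_prod:
  fixes U :: "real mat"
  assumes U: "U \<in> carrier_mat d q" and orth: "transpose_mat U * U = 1\<^sub>m q"
    and c: "c \<in> carrier_vec q" and c': "c' \<in> carrier_vec q"
  shows "(U *\<^sub>v c) \<bullet> (U *\<^sub>v c') = c \<bullet> c'"
proof -
  have "(U *\<^sub>v c) \<bullet> (U *\<^sub>v c') = (transpose_mat U *\<^sub>v (U *\<^sub>v c)) \<bullet> c'"
    using U c c' transpose_vec_mult_scalar[of U d q c' "U *\<^sub>v c"] by (simp add: comm_scalar_prod[of _ d])
  also have "transpose_mat U *\<^sub>v (U *\<^sub>v c) = c"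
    using U c orth by (simp flip: assoc_mult_mat_vec[of _ q d _ q])
  finally show ?thesis .
qed

lemma orthonormal_col_norm:
  fixes U :: "real mat"
  assumes "U \<in> carrier_mat d q" and "transpose_mat U * U = 1\<^sub>m q" and "a < q"
  shows "col U a \<bullet> col U a = 1"
  using assms index_mult_mat(1)[of a "transpose_mat U" a U] by simp

lemma orthonormal_col_scalar_prod:
  fixes U :: "real mat"
  assumes U: "U \<in> carrier_mat d q" and orth: "transpose_mat U * U = 1\<^sub>m q"
    and c: "c \<in> carrier_vec q" and a: "a < q"
  shows "col U a \<bullet> (U *\<^sub>v c) = c $ a"
  using orthonormal_mult_vec_scalar_prod[OF U orth _ c, of "unit_vec q a"] col_eq_mult_unit_vec[OF U a] c a
  by simp

lemma orthogonal_sum_col_scalar_prod_sq: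
  fixes V :: "real mat"
  assumes V: "V \<in> carrier_mat p p" and orth: "transpose_mat V * V = 1\<^sub>m p"
    and x: "x \<in> carrier_vec p"
  shows "(\<Sum>l<p. (col V l \<bullet> x)^2) = x \<bullet> x"
proof -
  have orth': "transpose_mat (transpose_mat V) * transpose_mat V = 1\<^sub>m p"
    using mat_mult_left_right_inverse[OF _ V orth] V by simp
  have "(\<Sum>l<p. (col V l \<bullet> x)^2) = (transpose_mat V *\<^sub>v x) \<bullet> (transpose_mat V *\<^sub>v x)"
    using V x by (auto simp: scalar_prod_self_eq_sum_sq intro!: sum.cong)
  also have "\<dots> = x \<bullet> x"
    using orthonormal_mult_vec_scalar_prod[OF _ orth' x x] V by simp
  finally show ?thesis .
qed

lemma sandwich_mult_vec:
  fixes U :: "real mat"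
  assumes U: "U \<in> carrier_mat d q" and x: "x \<in> carrier_vec d"
  shows "(U * mat_diag q g * transpose_mat U) *\<^sub>v x = U *\<^sub>v vec q (\<lambda>a. g a * (col U a \<bullet> x))"
proof -
  have "(U * mat_diag q g * transpose_mat U) *\<^sub>v x = U *\<^sub>v (mat_diag q g *\<^sub>v (transpose_mat U *\<^sub>v x))"
    using U x by (simp add: assoc_mult_mat_vec[of _ d q _ d] assoc_mult_mat_vec[of _ d q _ q])
  also have "mat_diag q g *\<^sub>v (transpose_mat U *\<^sub>v x) = vec q (\<lambda>a. g a * (col U a \<bullet> x))"
    using U x by (subst mat_diag_mult_vec) (auto intro!: eq_vecI)
  finally show ?thesis .
qed

lemma sandwich_mult_vec_orthonormal:
  fixes U :: "real mat"
  assumes U: "U \<in> carrier_mat d q" and orth: "transpose_mat U * U = 1\<^sub>m q"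
    and c: "c \<in> carrier_vec q"
  shows "(U * mat_diag q g * transpose_mat U) *\<^sub>v (U *\<^sub>v c) = U *\<^sub>v vec q (\<lambda>a. g a * c $ a)"
proof -
  have "vec q (\<lambda>a. g a * (col U a \<bullet> (U *\<^sub>v c))) = vec q (\<lambda>a. g a * c $ a)"
    using orthonormal_col_scalar_prod[OF U orth c] by (intro eq_vecI) auto
  thus ?thesis using sandwich_mult_vec[OF U, of "U *\<^sub>v c" g] U c by simp
qed

lemma sandwich_quad_form:
  fixes U :: "real mat"
  assumes U: "U \<in> carrier_mat d q" and x: "x \<in> carrier_vec d"
  shows "x \<bullet> ((U * mat_diag q g * transpose_mat U) *\<^sub>v x) = (\<Sum>a<q. g a * (col U a \<bullet> x)^2)"
proof -
  have "x \<bullet> ((U * mat_diag q g * transpose_mat U) *\<^sub>v x)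
      = (transpose_mat U *\<^sub>v x) \<bullet> vec q (\<lambda>a. g a * (col U a \<bullet> x))"
    unfolding sandwich_mult_vec[OF U x] using U x transpose_vec_mult_scalar[of U d q _ x] by simp
  also have "\<dots> = (\<Sum>a<q. g a * (col U a \<bullet> x)^2)"
    using U x by (auto simp: scalar_prod_def atLeast0LessThan power2_eq_square intro!: sum.cong)
  finally show ?thesis .
qed

lemma sandwich_quad_form_orthonormal:
  fixes U :: "real mat"
  assumes U: "U \<in> carrier_mat d q" and orth: "transpose_mat U * U = 1\<^sub>m q"
    and c: "c \<in> carrier_vec q"
  shows "(U *\<^sub>v c) \<bullet> ((U * mat_diag q g * transpose_mat U) *\<^sub>v (U *\<^sub>v c)) = (\<Sum>a<q. g a * (c $ a)^2)"
proof -
  have "(U *\<^sub>v c) \<bullet> ((U * mat_diag q g * transpose_mat U) *\<^sub>v (U *\<^sub>v c)) = c \<bullet> vec q (\<lambda>a. g a * c $ a)"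
    unfolding sandwich_mult_vec_orthonormal[OF U orth c]
    by (rule orthonormal_mult_vec_scalar_prod[OF U orth c]) simp
  also have "\<dots> = (\<Sum>a<q. g a * (c $ a)^2)"
    using c by (auto simp: scalar_prod_def atLeast0LessThan power2_eq_square intro!: sum.cong)
  finally show ?thesis .
qed

lemma transpose_svd:
  fixes U V :: "real mat"
  assumes U: "U \<in> carrier_mat d q" and V: "V \<in> carrier_mat e q"
  shows "transpose_mat (U * mat_diag q f * transpose_mat V) = V * mat_diag q f * transpose_mat U"
proof -
  have UD: "U * mat_diag q f \<in> carrier_mat d q" using U by simp
  have "transpose_mat (U * mat_diag q f * transpose_mat V)
      = V * (mat_diag q f * transpose_mat U)"
    using transpose_mult[OF UD, of "transpose_mat V" e] transpose_mult[OF U, of "mat_diag q f" q] U V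
    by simp
  thus ?thesis using U V by (simp add: assoc_mult_mat[of _ e q _ q _ d])
qed

lemma gram_svd:
  fixes U V :: "real mat"
  assumes U: "U \<in> carrier_mat d q" and V: "V \<in> carrier_mat e q"
    and orth: "transpose_mat U * U = 1\<^sub>m q"
  shows "transpose_mat (U * mat_diag q f * transpose_mat V) * (U * mat_diag q f * transpose_mat V)
    = V * mat_diag q (\<lambda>i. (f i)^2) * transpose_mat V"
proof -
  let ?D = "mat_diag q f"
  have DV: "?D * transpose_mat V \<in> carrier_mat q e" using V by (intro mult_carrier_mat) auto
  have VD: "V * ?D \<in> carrier_mat e q" using V by simp
  have "U * ?D * transpose_mat V = U * (?D * transpose_mat V)"
    using U V by (intro assoc_mult_mat) auto
  hence "(V * ?D * transpose_mat U) * (U * ?D * transpose_mat V)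
      = V * ?D * (transpose_mat U * (U * (?D * transpose_mat V)))"
    using U DV VD by (simp add: assoc_mult_mat[of _ e q _ d _ e])
  also have "transpose_mat U * (U * (?D * transpose_mat V)) = ?D * transpose_mat V"
    using U DV orth by (simp flip: assoc_mult_mat[of _ q d _ q _ e])
  also have "V * ?D * (?D * transpose_mat V) = V * (?D * (?D * transpose_mat V))"
    by (rule assoc_mult_mat[OF V _ DV]) simp
  also have "?D * (?D * transpose_mat V) = (?D * ?D) * transpose_mat V"
    by (rule assoc_mult_mat[symmetric]) (use V in auto)
  also have "V * ((?D * ?D) * transpose_mat V) = V * (?D * ?D) * transpose_mat V"
    by (rule assoc_mult_mat[symmetric]) (use V in auto)
  also have "?D * ?D = mat_diag q (\<lambda>i. (f i)^2)" by (simp add: power2_eq_square)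
  finally show ?thesis unfolding transpose_svd[OF U V] .
qed

lemma svd_index:
  fixes U V :: "real mat"
  assumes U: "U \<in> carrier_mat d q" and V: "V \<in> carrier_mat e q" and i: "i < d" and j: "j < e"
  shows "(U * mat_diag q f * transpose_mat V) $$ (i,j) = (\<Sum>l<q. f l * U $$ (i,l) * V $$ (j,l))"
proof -
  have UD: "U * mat_diag q f \<in> carrier_mat d q" using U by simp
  have "(U * mat_diag q f) $$ (i,l) = U $$ (i,l) * f l" if l: "l < q" for l
  proof -
    have "(U * mat_diag q f) $$ (i,l) = row U i \<bullet> col (mat_diag q f) l"
      using U i l by (intro index_mult_mat(1)) auto
    also have "\<dots> = (\<Sum>j\<in>{0..<q}. U $$ (i,j) * (if j = l then f l else 0))"
      using U i l unfolding scalar_prod_def mat_diag_def by (intro sum.cong) auto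
    finally have "(U * mat_diag q f) $$ (i,l) = (\<Sum>j\<in>{0..<q}. U $$ (i,j) * (if j = l then f l else 0))" .
    thus ?thesis using l by (simp add: if_distrib cong: if_cong)
  qed
  hence sum_eq: "(\<Sum>l\<in>{0..<q}. (U * mat_diag q f) $$ (i,l) * V $$ (j,l))
      = (\<Sum>l<q. f l * U $$ (i,l) * V $$ (j,l))"
    by (auto simp: atLeast0LessThan intro!: sum.cong)
  have "(U * mat_diag q f * transpose_mat V) $$ (i,j)
      = row (U * mat_diag q f) i \<bullet> col (transpose_mat V) j"
    using UD V i j by (intro index_mult_mat(1)) auto
  also have "\<dots> = (\<Sum>l\<in>{0..<q}. (U * mat_diag q f) $$ (i,l) * V $$ (j,l))"
    using UD V i j unfolding scalar_prod_def by (intro sum.cong) auto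
  finally show ?thesis unfolding sum_eq .
qed

lemma fro_norm_sq_orthonormal_expansion:
  fixes U V :: "real mat" and f :: "nat \<Rightarrow> real"
  assumes U: "U \<in> carrier_mat m r" and V: "V \<in> carrier_mat n r"
    and orthU: "transpose_mat U * U = 1\<^sub>m r" and orthV: "transpose_mat V * V = 1\<^sub>m r"
    and L: "L \<subseteq> {..<r}"
  shows "(\<Sum>i<m. \<Sum>j<n. (\<Sum>l\<in>L. f l * U $$ (i,l) * V $$ (j,l))^2) = (\<Sum>l\<in>L. (f l)^2)"
proof -
  define c where "c = (\<lambda>i. vec r (\<lambda>l. if l \<in> L then f l * U $$ (i,l) else 0))"
  have c: "c i \<in> carrier_vec r" for i unfolding c_def by simp
  have row_sum: "(\<Sum>j<n. (\<Sum>l\<in>L. f l * U $$ (i,l) * V $$ (j,l))^2) = (\<Sum>l\<in>L. (f l)^2 * (U $$ (i,l))^2)"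
    if i: "i < m" for i
  proof -
    have "row V j \<bullet> c i = (\<Sum>l\<in>L. f l * U $$ (i,l) * V $$ (j,l))" if j: "j < n" for j
    proof -
      have "row V j \<bullet> c i = (\<Sum>l\<in>{0..<r}. V $$ (j,l) * (if l \<in> L then f l * U $$ (i,l) else 0))"
        using V j unfolding c_def by (simp add: scalar_prod_def)
      also have "\<dots> = (\<Sum>l\<in>{0..<r} \<inter> L. V $$ (j,l) * (f l * U $$ (i,l)))"
        by (simp add: if_distrib sum.inter_restrict[symmetric] cong: if_cong)
      also have "{0..<r} \<inter> L = L" using L by auto
      finally show ?thesis by (simp add: algebra_simps)
    qed
    hence "(\<Sum>j<n. (\<Sum>l\<in>L. f l * U $$ (i,l) * V $$ (j,l))^2) = (V *\<^sub>v c i) \<bullet> (V *\<^sub>v c i)"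
      using V by (auto simp: scalar_prod_self_eq_sum_sq intro!: sum.cong)
    also have "\<dots> = c i \<bullet> c i" using orthonormal_mult_vec_scalar_prod[OF V orthV c c] .
    also have "\<dots> = (\<Sum>l<r. (if l \<in> L then (f l * U $$ (i,l))^2 else 0))"
      unfolding scalar_prod_self_eq_sum_sq c_def by (auto intro!: sum.cong)
    also have "\<dots> = (\<Sum>l\<in>{..<r} \<inter> L. (f l * U $$ (i,l))^2)"
      by (simp add: sum.inter_restrict)
    also have "{..<r} \<inter> L = L" using L by auto
    finally show ?thesis by (simp add: power_mult_distrib)
  qed
  have col_norm: "(\<Sum>i<m. (U $$ (i,l))^2) = 1" if l: "l < r" for l
    using orthonormal_col_norm[OF U orthU l] U l by (simp add: scalar_prod_self_eq_sum_sq)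
  have "(\<Sum>i<m. \<Sum>j<n. (\<Sum>l\<in>L. f l * U $$ (i,l) * V $$ (j,l))^2)
      = (\<Sum>l\<in>L. (f l)^2 * (\<Sum>i<m. (U $$ (i,l))^2))"
    using row_sum by (simp add: sum.swap[of _ "{..<m}"] sum_distrib_left)
  also have "\<dots> = (\<Sum>l\<in>L. (f l)^2)" using col_norm L by (intro sum.cong) auto
  finally show ?thesis .
qed

context
  fixes A UA VA :: "real mat" and sA :: "nat \<Rightarrow> real" and m n r :: nat
  assumes A_carrier: "A \<in> carrier_mat m n"
    and UA_carrier: "UA \<in> carrier_mat m r" and VA_carrier: "VA \<in> carrier_mat n r"
    and UA_orth: "transpose_mat UA * UA = 1\<^sub>m r" and VA_orth: "transpose_mat VA * VA = 1\<^sub>m r"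
    and A_svd: "A = UA * mat_diag r sA * transpose_mat VA"
begin

lemma svd_index_eq:
  "i < m \<Longrightarrow> j < n \<Longrightarrow> A $$ (i,j) = (\<Sum>l<r. sA l * UA $$ (i,l) * VA $$ (j,l))"
  unfolding A_svd by (rule svd_index[OF UA_carrier VA_carrier])

lemma svd_fro_norm_sq: "(fro_norm A)^2 = (\<Sum>l<r. (sA l)^2)"
proof -
  have "(fro_norm A)^2 = (\<Sum>i<m. \<Sum>j<n. (\<Sum>l\<in>{..<r}. sA l * UA $$ (i,l) * VA $$ (j,l))^2)"
    unfolding fro_norm_sq using A_carrier
    by (auto simp: svd_index_eq intro!: sum.cong)
  also have "\<dots> = (\<Sum>l<r. (sA l)^2)"
    by (rule fro_norm_sq_orthonormal_expansion[OF UA_carrier VA_carrier UA_orth VA_orth]) auto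
  finally show ?thesis .
qed

lemma svd_truncation_fro_norm_sq:
  assumes "k \<le> r"
  shows "(fro_norm (A - mat m n (\<lambda>(i,j). \<Sum>l<k. sA l * UA $$ (i,l) * VA $$ (j,l))))^2
    = (\<Sum>l\<in>{k..<r}. (sA l)^2)"
proof -
  have "(fro_norm (A - mat m n (\<lambda>(i,j). \<Sum>l<k. sA l * UA $$ (i,l) * VA $$ (j,l))))^2
      = (\<Sum>i<m. \<Sum>j<n. (\<Sum>l\<in>{k..<r}. sA l * UA $$ (i,l) * VA $$ (j,l))^2)"
    unfolding fro_norm_sq using A_carrier sum_lessThan_split[OF assms]
    by (auto simp: svd_index_eq intro!: sum.cong)
  also have "\<dots> = (\<Sum>l\<in>{k..<r}. (sA l)^2)"
    by (rule fro_norm_sq_orthonormal_expansion[OF UA_carrier VA_carrier UA_orth VA_orth]) auto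
  finally show ?thesis .
qed

lemma gram_eq_svd: "transpose_mat A * A = VA * mat_diag r (\<lambda>l. (sA l)^2) * transpose_mat VA"
  unfolding A_svd by (rule gram_svd[OF UA_carrier VA_carrier UA_orth])

lemma gram_mult_col_VA:
  assumes l: "l < r"
  shows "(transpose_mat A * A) *\<^sub>v col VA l = (sA l)^2 \<cdot>\<^sub>v col VA l"
proof -
  have "vec r (\<lambda>a. (sA a)^2 * unit_vec r l $ a) = (sA l)^2 \<cdot>\<^sub>v unit_vec r l"
    by (intro eq_vecI) (auto simp: unit_vec_def)
  thus ?thesis
    unfolding gram_eq_svd col_eq_mult_unit_vec[OF VA_carrier l]
      sandwich_mult_vec_orthonormal[OF VA_carrier VA_orth unit_vec_carrier]
    using VA_carrier by (simp add: mult_mat_vec)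
qed

lemma gram_eigenvalue_cases:
  assumes v: "v \<in> carrier_vec n" "v \<noteq> 0\<^sub>v n" and e0: "e \<noteq> 0"
    and ev: "(transpose_mat A * A) *\<^sub>v v = e \<cdot>\<^sub>v v"
  shows "\<exists>l<r. e = (sA l)^2"
proof -
  define y where "y = transpose_mat VA *\<^sub>v v"
  have y: "y \<in> carrier_vec r" unfolding y_def using VA_carrier v by simp
  have Pv: "(transpose_mat A * A) *\<^sub>v v = VA *\<^sub>v vec r (\<lambda>a. (sA a)^2 * y $ a)"
  proof -
    have "vec r (\<lambda>a. (sA a)^2 * (col VA a \<bullet> v)) = vec r (\<lambda>a. (sA a)^2 * y $ a)"
      unfolding y_def using VA_carrier v by (intro eq_vecI) auto
    thus ?thesis unfolding gram_eq_svd using sandwich_mult_vec[OF VA_carrier v(1)] by simp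
  qed
  have "transpose_mat VA *\<^sub>v (VA *\<^sub>v c) = c" if c: "c \<in> carrier_vec r" for c
    using assoc_mult_mat_vec[of "transpose_mat VA" r n VA r c] VA_carrier VA_orth c by simp
  hence "vec r (\<lambda>a. (sA a)^2 * y $ a) = transpose_mat VA *\<^sub>v ((transpose_mat A * A) *\<^sub>v v)"
    unfolding Pv by simp
  also have "\<dots> = e \<cdot>\<^sub>v y"
    unfolding ev y_def using VA_carrier v by (simp add: mult_mat_vec)
  finally have vv: "vec r (\<lambda>a. (sA a)^2 * y $ a) = e \<cdot>\<^sub>v y" .
  show ?thesis
  proof (cases "\<exists>a<r. y $ a \<noteq> 0")
    case True
    then obtain a where "a < r" "y $ a \<noteq> 0" by auto
    thus ?thesis using arg_cong[OF vv, of "\<lambda>x. x $ a"] y by auto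
  next
    case False
    hence "vec r (\<lambda>a. (sA a)^2 * y $ a) = 0\<^sub>v r" by (intro eq_vecI) auto
    moreover have "VA *\<^sub>v 0\<^sub>v r = 0\<^sub>v n" using VA_carrier by (intro eq_vecI) auto
    ultimately have ev0: "e \<cdot>\<^sub>v v = 0\<^sub>v n" using ev Pv by simp
    have "v = 0\<^sub>v n"
    proof (rule eq_vecI)
      fix i assume "i < dim_vec (0\<^sub>v n :: real vec)"
      thus "v $ i = 0\<^sub>v n $ i" using arg_cong[OF ev0, of "\<lambda>x. x $ i"] e0 v(1) by simp
    qed (use v(1) in simp)
    with v(2) show ?thesis by simp
  qed
qed

lemma svd_nonzero_eigenvalues:
  assumes sA_pos: "\<forall>l<r. 0 < sA l"
  shows "{e. e \<noteq> 0 \<and> eigenvalue (transpose_mat A * A) e} = (\<lambda>l. (sA l)^2) ` {..<r}"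
proof (intro equalityI subsetI)
  have P_carrier: "transpose_mat A * A \<in> carrier_mat n n" using A_carrier by simp
  fix e assume "e \<in> {e. e \<noteq> 0 \<and> eigenvalue (transpose_mat A * A) e}"
  then obtain v where "e \<noteq> 0" "v \<in> carrier_vec n" "v \<noteq> 0\<^sub>v n"
    "(transpose_mat A * A) *\<^sub>v v = e \<cdot>\<^sub>v v"
    unfolding eigenvalue_def eigenvector_def using P_carrier by auto
  thus "e \<in> (\<lambda>l. (sA l)^2) ` {..<r}" using gram_eigenvalue_cases by blast
next
  fix e assume "e \<in> (\<lambda>l. (sA l)^2) ` {..<r}"
  then obtain l where l: "l < r" and e: "e = (sA l)^2" by auto
  have "col VA l \<in> carrier_vec n" "col VA l \<noteq> 0\<^sub>v n"
    using VA_carrier l orthonormal_col_norm[OF VA_carrier VA_orth l] by auto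
  moreover have "e \<noteq> 0" using sA_pos l e by (metis less_irrefl power_not_zero)
  ultimately show "e \<in> {e. e \<noteq> 0 \<and> eigenvalue (transpose_mat A * A) e}"
    unfolding eigenvalue_def eigenvector_def e using gram_mult_col_VA[OF l] A_carrier by auto
qed

context
  assumes sA_pos: "\<forall>l<r. 0 < sA l" and sA_dec: "\<forall>a b. a \<le> b \<longrightarrow> b < r \<longrightarrow> sA b \<le> sA a"
    and r_pos: "0 < r"
begin

lemma sigma_min_svd: "sigma_min A = sA (r - 1)"
proof -
  have "Min ((\<lambda>l. (sA l)^2) ` {..<r}) = (sA (r - 1))^2"
  proof (rule Min_eqI)
    fix y assume "y \<in> (\<lambda>l. (sA l)^2) ` {..<r}"
    then obtain l where "l < r" "y = (sA l)^2" by auto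
    moreover have "0 \<le> sA (r - 1)" using sA_pos r_pos by (simp add: less_imp_le)
    ultimately show "(sA (r - 1))^2 \<le> y" using sA_dec r_pos by (auto intro!: power_mono)
  qed (use r_pos in auto)
  thus ?thesis
    unfolding sigma_min_def svd_nonzero_eigenvalues[OF sA_pos] using sA_pos r_pos
    by (simp add: less_imp_le)
qed

lemma sigma_min_pos: "0 < sigma_min A"
  unfolding sigma_min_svd using sA_pos r_pos by simp

lemma sigma_min_sq_le:
  assumes "l < r"
  shows "(sigma_min A)^2 \<le> (sA l)^2"
proof -
  have "sA (r - 1) \<le> sA l" using sA_dec assms by auto
  thus ?thesis using sigma_min_pos unfolding sigma_min_svd by (simp add: power_mono)
qed

lemma sigma_min_sq_le_fro_norm_sq: "(sigma_min A)^2 \<le> (fro_norm A)^2"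
  unfolding svd_fro_norm_sq using sigma_min_sq_le[of 0] r_pos
  by (auto intro: order_trans[OF _ member_le_sum])

end

end

section \<open>Near-isometries\<close>

context
  fixes U :: "real mat" and m k :: nat and \<eta> :: real
  assumes U_carrier: "U \<in> carrier_mat m k" and \<eta>_nonneg: "0 \<le> \<eta>"
    and U_near_isometry: "\<And>y. y \<in> carrier_vec k \<Longrightarrow> (U *\<^sub>v y) \<bullet> (U *\<^sub>v y) \<le> (1 + \<eta>) * (y \<bullet> y)"
begin

lemma near_isometry_residual:
  assumes a: "a \<in> carrier_vec m"
  shows "(a - U *\<^sub>v (transpose_mat U *\<^sub>v a)) \<bullet> (a - U *\<^sub>v (transpose_mat U *\<^sub>v a))
      \<le> a \<bullet> a - (1 - \<eta>) * ((transpose_mat U *\<^sub>v a) \<bullet> (transpose_mat U *\<^sub>v a))"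
    and "(transpose_mat U *\<^sub>v a) \<bullet> (transpose_mat U *\<^sub>v a) \<le> (1 + \<eta>) * (a \<bullet> a)"
proof -
  define y where "y = transpose_mat U *\<^sub>v a"
  have y: "y \<in> carrier_vec k" unfolding y_def using U_carrier a by simp
  have Uy: "U *\<^sub>v y \<in> carrier_vec m" using U_carrier y by simp
  have ay: "a \<bullet> (U *\<^sub>v y) = y \<bullet> y"
    using transpose_vec_mult_scalar[OF U_carrier y a] unfolding y_def by simp
  have "(a - U *\<^sub>v y) \<bullet> (a - U *\<^sub>v y) = a \<bullet> a - 2 * (y \<bullet> y) + (U *\<^sub>v y) \<bullet> (U *\<^sub>v y)"
    using scalar_prod_diff_self[OF a Uy] unfolding ay .
  also have "\<dots> \<le> a \<bullet> a - (1 - \<eta>) * (y \<bullet> y)"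
    using U_near_isometry[OF y] by (simp add: algebra_simps)
  finally show "(a - U *\<^sub>v y) \<bullet> (a - U *\<^sub>v y) \<le> a \<bullet> a - (1 - \<eta>) * (y \<bullet> y)"
    unfolding y_def .
  have "(y \<bullet> y)^2 \<le> (a \<bullet> a) * ((U *\<^sub>v y) \<bullet> (U *\<^sub>v y))"
    using scalar_prod_sq_le[OF a Uy] unfolding ay .
  also have "\<dots> \<le> (a \<bullet> a) * ((1 + \<eta>) * (y \<bullet> y))"
    by (rule mult_left_mono[OF U_near_isometry[OF y] scalar_prod_self_nonneg])
  finally have "(y \<bullet> y)^2 \<le> ((1 + \<eta>) * (a \<bullet> a)) * (y \<bullet> y)" by (simp only: mult_ac)
  thus "y \<bullet> y \<le> (1 + \<eta>) * (a \<bullet> a)"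
    by (rule power2_le_mult_imp_le) (use \<eta>_nonneg scalar_prod_self_nonneg[of a] in simp)
qed

lemma near_isometry_proj_fro_norm:
  fixes A :: "real mat"
  assumes A: "A \<in> carrier_mat m n"
  shows "(fro_norm (A - U * transpose_mat U * A))^2
      \<le> (fro_norm A)^2 - (1 - \<eta>) * (fro_norm (transpose_mat U * A))^2"
    and "(fro_norm (transpose_mat U * A))^2 \<le> (1 + \<eta>) * (fro_norm A)^2"
proof -
  let ?R = "A - U * transpose_mat U * A" and ?Y = "\<lambda>j. transpose_mat U *\<^sub>v col A j"
  have Ut: "transpose_mat U \<in> carrier_mat k m" using U_carrier by simp
  have UU: "U * transpose_mat U \<in> carrier_mat m m" using mult_carrier_mat[OF U_carrier Ut] .
  have UUA: "U * transpose_mat U * A \<in> carrier_mat m n" using mult_carrier_mat[OF UU A] .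
  have UA: "transpose_mat U * A \<in> carrier_mat k n"
    using mult_carrier_mat[OF Ut A] .
  have a: "col A j \<in> carrier_vec m" if "j < n" for j using col_carrier_vec[OF that A] .
  have col_UA: "col (transpose_mat U * A) j = ?Y j" if "j < n" for j
    using col_mult2[OF Ut A that] .
  have col_res: "col ?R j = col A j - U *\<^sub>v ?Y j" if j: "j < n" for j
  proof -
    have "col ?R j = col A j - col (U * transpose_mat U * A) j"
      by (rule col_minus_mat[OF A UUA j])
    also have "col (U * transpose_mat U * A) j = U *\<^sub>v ?Y j"
      using col_mult2[OF UU A j] assoc_mult_mat_vec[OF U_carrier Ut a[OF j]]
      by simp
    finally show ?thesis .
  qed
  have "(fro_norm ?R)^2 = (\<Sum>j<n. col ?R j \<bullet> col ?R j)"
    by (rule fro_norm_sq_cols[OF minus_carrier_mat[OF UUA]])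
  also have "\<dots> \<le> (\<Sum>j<n. col A j \<bullet> col A j - (1 - \<eta>) * (?Y j \<bullet> ?Y j))"
  proof (rule sum_mono)
    fix j assume "j \<in> {..<n}"
    thus "col ?R j \<bullet> col ?R j \<le> col A j \<bullet> col A j - (1 - \<eta>) * (?Y j \<bullet> ?Y j)"
      using near_isometry_residual(1)[OF a] col_res by simp
  qed
  also have "\<dots> = (fro_norm A)^2 - (1 - \<eta>) * (fro_norm (transpose_mat U * A))^2"
    unfolding fro_norm_sq_cols[OF A] fro_norm_sq_cols[OF UA]
    by (simp add: col_UA sum_subtractf sum_distrib_left)
  finally show "(fro_norm ?R)^2 \<le> (fro_norm A)^2 - (1 - \<eta>) * (fro_norm (transpose_mat U * A))^2" .
  have "(fro_norm (transpose_mat U * A))^2 = (\<Sum>j<n. ?Y j \<bullet> ?Y j)"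
    unfolding fro_norm_sq_cols[OF UA] by (simp add: col_UA)
  also have "\<dots> \<le> (\<Sum>j<n. (1 + \<eta>) * (col A j \<bullet> col A j))"
    by (rule sum_mono) (use near_isometry_residual(2)[OF a] in simp)
  also have "\<dots> = (1 + \<eta>) * (fro_norm A)^2"
    unfolding fro_norm_sq_cols[OF A] by (simp add: sum_distrib_left)
  finally show "(fro_norm (transpose_mat U * A))^2 \<le> (1 + \<eta>) * (fro_norm A)^2" .
qed

end

section \<open>The perturbation argument\<close>

text \<open>The deterministic core of the theorem: \<open>Q\<close> plays the role of \<open>W\<^sup>T W\<close>, \<open>\<tau>\<close> of
  \<open>\<theta> \<parallel>A\<parallel>\<^sub>F\<^sup>2\<close> and \<open>b\<close> of \<open>\<sigma>\<^sub>m\<^sub>i\<^sub>n(A)\<^sup>2\<close>.\<close>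
locale sketch_perturbation =
  fixes A UA VA S Vf Q :: "real mat" and m n r k p :: nat and sA s :: "nat \<Rightarrow> real"
    and \<tau> b :: real
  assumes A_carrier: "A \<in> carrier_mat m n"
    and UA_carrier: "UA \<in> carrier_mat m r" and VA_carrier: "VA \<in> carrier_mat n r"
    and UA_orth: "transpose_mat UA * UA = 1\<^sub>m r" and VA_orth: "transpose_mat VA * VA = 1\<^sub>m r"
    and A_svd: "A = UA * mat_diag r sA * transpose_mat VA"
    and sA_pos: "\<forall>l<r. 0 < sA l" and sA_sq_ge: "\<forall>l<r. b \<le> (sA l)^2"
    and k_pos: "1 \<le> k" and k_le_r: "k \<le> r" and k_le_p: "k \<le> p"
    and S_carrier: "S \<in> carrier_mat m p"
    and Vf_carrier: "Vf \<in> carrier_mat p p" and Vf_orth: "transpose_mat Vf * Vf = 1\<^sub>m p"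
    and s_nonneg: "\<forall>l<p. 0 \<le> s l" and s_dec: "\<forall>a b. a \<le> b \<longrightarrow> b < p \<longrightarrow> s b \<le> s a"
    and Q_eq: "Q = Vf * mat_diag p (\<lambda>l. (s l)^2) * transpose_mat Vf"
    and left_gram_err: "fro_norm (A * transpose_mat A - S * transpose_mat S) \<le> \<tau>"
    and right_gram_err: "fro_norm (transpose_mat S * S - Q) \<le> \<tau>"
    and \<tau>_pos: "0 < \<tau>" and \<tau>_small: "8 * \<tau> \<le> b"
begin

abbreviation "M \<equiv> A * transpose_mat A"
abbreviation "E \<equiv> M - S * transpose_mat S"
abbreviation "D \<equiv> transpose_mat S * S - Q"

definition "\<beta> = \<tau> / b"

lemma b_pos: "0 < b" and \<beta>_pos: "0 < \<beta>" and \<beta>_le: "\<beta> \<le> 1 / 8" and \<beta>_mult_b: "\<beta> * b = \<tau>"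
  using \<tau>_pos \<tau>_small unfolding \<beta>_def by (auto simp: field_simps)

lemma M_carrier: "M \<in> carrier_mat m m" and E_carrier: "E \<in> carrier_mat m m"
  and Q_carrier: "Q \<in> carrier_mat p p" and D_carrier: "D \<in> carrier_mat p p"
  using A_carrier S_carrier Vf_carrier unfolding Q_eq by auto

lemma M_eq: "M = UA * mat_diag r (\<lambda>l. (sA l)^2) * transpose_mat UA"
proof -
  have At: "transpose_mat A = VA * mat_diag r sA * transpose_mat UA"
    unfolding A_svd by (rule transpose_svd[OF UA_carrier VA_carrier])
  have "M = transpose_mat (transpose_mat A) * transpose_mat A" by simp
  thus ?thesis unfolding At by (simp only: gram_svd[OF VA_carrier UA_carrier VA_orth])
qed

lemma E_quad_form: "x \<in> carrier_vec m \<Longrightarrow> \<bar>x \<bullet> (E *\<^sub>v x)\<bar> \<le> \<tau> * (x \<bullet> x)"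
  using quad_form_abs_le_fro_norm[OF E_carrier, of x] left_gram_err scalar_prod_self_nonneg[of x]
  by (meson mult_right_mono order_trans)

lemma E_mult_vec_sq: "x \<in> carrier_vec m \<Longrightarrow> (E *\<^sub>v x) \<bullet> (E *\<^sub>v x) \<le> \<tau>^2 * (x \<bullet> x)"
  using mult_vec_sq_le_fro_norm[OF E_carrier, of x] power_mono[OF left_gram_err fro_norm_nonneg]
    scalar_prod_self_nonneg[of x]
  by (meson mult_right_mono order_trans)

lemma D_quad_form: "x \<in> carrier_vec p \<Longrightarrow> \<bar>x \<bullet> (D *\<^sub>v x)\<bar> \<le> \<tau> * (x \<bullet> x)"
  using quad_form_abs_le_fro_norm[OF D_carrier, of x] right_gram_err scalar_prod_self_nonneg[of x]
  by (meson mult_right_mono order_trans)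

lemma Q_quad_form: "x \<in> carrier_vec p \<Longrightarrow> x \<bullet> (Q *\<^sub>v x) = (\<Sum>l<p. (s l)^2 * (col Vf l \<bullet> x)^2)"
  unfolding Q_eq by (rule sandwich_quad_form[OF Vf_carrier])

lemma Q_quad_form_ge:
  assumes x: "x \<in> carrier_vec p"
  shows "(S *\<^sub>v x) \<bullet> (S *\<^sub>v x) - \<tau> * (x \<bullet> x) \<le> x \<bullet> (Q *\<^sub>v x)"
  using quad_form_minus[OF _ Q_carrier x, of "transpose_mat S * S"] quad_form_gram[OF S_carrier x]
    D_quad_form[OF x] S_carrier
  by (simp add: abs_le_iff)

text \<open>For \<open>y \<in> \<real>\<^sup>k\<close>, \<open>top_pre y = U\<^sub>k \<Sigma>\<^sub>k\<^sup>-\<^sup>1 y\<close> satisfies \<open>M (top_pre y) = U\<^sub>k \<Sigma>\<^sub>k y\<close>, so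
  \<open>y \<mapsto> A\<^sup>T (top_pre y)\<close> is an isometry; its sketched counterpart \<open>top_sketch y\<close> is a
  near-isometry by (E1), which drives the lower bounds on the singular values of \<open>W\<close>.\<close>
definition "top_coords y = vec r (\<lambda>a. if a < k then y $ a / sA a else 0)"
definition "top_pre y = UA *\<^sub>v top_coords y"
definition "top_sketch y = transpose_mat S *\<^sub>v top_pre y"
definition "top_sketch_adj f = vec k (\<lambda>a. (col UA a \<bullet> (S *\<^sub>v f)) / sA a)"

lemma top_coords_carrier [simp]: "top_coords y \<in> carrier_vec r"
  and top_pre_carrier [simp]: "top_pre y \<in> carrier_vec m"
  and top_sketch_carrier [simp]: "top_sketch y \<in> carrier_vec p"
  and top_sketch_adj_carrier [simp]: "top_sketch_adj f \<in> carrier_vec k"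
  unfolding top_coords_def top_pre_def top_sketch_def top_sketch_adj_def
  using UA_carrier S_carrier by auto

lemma top_pre_norm_le:
  assumes y: "y \<in> carrier_vec k"
  shows "top_pre y \<bullet> top_pre y \<le> (y \<bullet> y) / b"
proof -
  have "top_pre y \<bullet> top_pre y = top_coords y \<bullet> top_coords y"
    unfolding top_pre_def by (rule orthonormal_mult_vec_scalar_prod[OF UA_carrier UA_orth]) auto
  also have "\<dots> = (\<Sum>a<r. if a < k then (y $ a)^2 / (sA a)^2 else 0)"
    unfolding scalar_prod_self_eq_sum_sq top_coords_def by (auto intro!: sum.cong simp: power_divide)
  also have "\<dots> = (\<Sum>a<k. (y $ a)^2 / (sA a)^2)" by (rule sum_if_less_eq[OF k_le_r])
  also have "\<dots> \<le> (\<Sum>a<k. (y $ a)^2 / b)"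
  proof (rule sum_mono)
    fix a assume "a \<in> {..<k}"
    hence "b \<le> (sA a)^2" using sA_sq_ge k_le_r by auto
    thus "(y $ a)^2 / (sA a)^2 \<le> (y $ a)^2 / b" using b_pos by (simp add: frac_le)
  qed
  also have "\<dots> = (y \<bullet> y) / b" using y by (simp add: scalar_prod_self_eq_sum_sq sum_divide_distrib)
  finally show ?thesis .
qed

lemma M_top_pre:
  assumes y: "y \<in> carrier_vec k"
  shows "M *\<^sub>v top_pre y = UA *\<^sub>v vec r (\<lambda>a. if a < k then sA a * y $ a else 0)"
proof -
  have "M *\<^sub>v top_pre y = UA *\<^sub>v vec r (\<lambda>a. (sA a)^2 * top_coords y $ a)"
    unfolding M_eq top_pre_def by (rule sandwich_mult_vec_orthonormal[OF UA_carrier UA_orth]) simp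
  also have "vec r (\<lambda>a. (sA a)^2 * top_coords y $ a) = vec r (\<lambda>a. if a < k then sA a * y $ a else 0)"
    using sA_pos k_le_r unfolding top_coords_def by (intro eq_vecI) (auto simp: power2_eq_square)
  finally show ?thesis .
qed

lemma quad_form_M_top_pre:
  assumes y: "y \<in> carrier_vec k"
  shows "top_pre y \<bullet> (M *\<^sub>v top_pre y) = y \<bullet> y"
proof -
  have "top_pre y \<bullet> (M *\<^sub>v top_pre y) = (\<Sum>a<r. (sA a)^2 * (top_coords y $ a)^2)"
    unfolding M_eq top_pre_def by (rule sandwich_quad_form_orthonormal[OF UA_carrier UA_orth]) simp
  also have "\<dots> = (\<Sum>a<r. if a < k then (y $ a)^2 else 0)"
    using sA_pos k_le_r unfolding top_coords_def by (intro sum.cong) (auto simp: power_divide)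
  also have "\<dots> = y \<bullet> y" using y by (simp add: sum_if_less_eq[OF k_le_r] scalar_prod_self_eq_sum_sq)
  finally show ?thesis .
qed

lemma M_top_pre_norm:
  assumes y: "y \<in> carrier_vec k"
  shows "(M *\<^sub>v top_pre y) \<bullet> (M *\<^sub>v top_pre y) = (\<Sum>a<k. (sA a)^2 * (y $ a)^2)"
proof -
  have "(M *\<^sub>v top_pre y) \<bullet> (M *\<^sub>v top_pre y)
      = vec r (\<lambda>a. if a < k then sA a * y $ a else 0) \<bullet> vec r (\<lambda>a. if a < k then sA a * y $ a else 0)"
    unfolding M_top_pre[OF y] by (rule orthonormal_mult_vec_scalar_prod[OF UA_carrier UA_orth]) auto
  also have "\<dots> = (\<Sum>a<r. if a < k then (sA a)^2 * (y $ a)^2 else 0)"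
    unfolding scalar_prod_self_eq_sum_sq by (auto intro!: sum.cong simp: power_mult_distrib)
  finally show ?thesis by (simp add: sum_if_less_eq[OF k_le_r])
qed

lemma M_top_pre_norm_ge:
  assumes y: "y \<in> carrier_vec k"
  shows "b * (y \<bullet> y) \<le> (M *\<^sub>v top_pre y) \<bullet> (M *\<^sub>v top_pre y)"
proof -
  have "b * (y \<bullet> y) = (\<Sum>a<k. b * (y $ a)^2)"
    using y by (simp add: scalar_prod_self_eq_sum_sq sum_distrib_left)
  also have "\<dots> \<le> (\<Sum>a<k. (sA a)^2 * (y $ a)^2)"
    using sA_sq_ge k_le_r by (intro sum_mono mult_right_mono) auto
  finally show ?thesis unfolding M_top_pre_norm[OF y] .
qed

lemma top_sketch_norm_le:
  assumes y: "y \<in> carrier_vec k"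
  shows "top_sketch y \<bullet> top_sketch y \<le> (1 + \<beta>) * (y \<bullet> y)"
proof -
  have "top_sketch y \<bullet> top_sketch y = y \<bullet> y - top_pre y \<bullet> (E *\<^sub>v top_pre y)"
    unfolding top_sketch_def
    using quad_form_gram_transpose[OF S_carrier top_pre_carrier, of y]
      quad_form_minus[OF M_carrier _ top_pre_carrier, of "S * transpose_mat S" y]
      quad_form_M_top_pre[OF y] S_carrier
    by simp
  moreover have "\<bar>top_pre y \<bullet> (E *\<^sub>v top_pre y)\<bar> \<le> \<tau> * ((y \<bullet> y) / b)"
    using E_quad_form[OF top_pre_carrier] top_pre_norm_le[OF y] \<tau>_pos
    by (meson mult_left_mono less_imp_le order_trans)
  ultimately show ?thesis unfolding \<beta>_def by (simp add: abs_le_iff algebra_simps)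
qed

lemma S_top_sketch: "S *\<^sub>v top_sketch y = M *\<^sub>v top_pre y - E *\<^sub>v top_pre y"
proof -
  have "S *\<^sub>v top_sketch y = (S * transpose_mat S) *\<^sub>v top_pre y"
    unfolding top_sketch_def using S_carrier by (simp add: assoc_mult_mat_vec[of _ m p _ m])
  thus ?thesis using M_carrier S_carrier by (intro eq_vecI) (auto simp: minus_mult_distrib_mat_vec)
qed

lemma scalar_prod_top_sketch:
  assumes y: "y \<in> carrier_vec k" and f: "f \<in> carrier_vec p"
  shows "f \<bullet> top_sketch y = top_sketch_adj f \<bullet> y"
proof -
  have "f \<bullet> top_sketch y = (S *\<^sub>v f) \<bullet> top_pre y"
    unfolding top_sketch_def using transpose_vec_mult_scalar[of "transpose_mat S" p m "top_pre y" f] S_carrier f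
    by simp
  also have "\<dots> = (transpose_mat UA *\<^sub>v (S *\<^sub>v f)) \<bullet> top_coords y"
    unfolding top_pre_def using S_carrier f
    by (intro transpose_vec_mult_scalar[OF UA_carrier top_coords_carrier, symmetric]) auto
  also have "\<dots> = (\<Sum>a<r. if a < k then (col UA a \<bullet> (S *\<^sub>v f)) / sA a * y $ a else 0)"
    unfolding top_coords_def using UA_carrier S_carrier f
    by (auto simp: scalar_prod_def atLeast0LessThan intro!: sum.cong)
  also have "\<dots> = top_sketch_adj f \<bullet> y"
    unfolding sum_if_less_eq[OF k_le_r] top_sketch_adj_def using y
    by (simp add: scalar_prod_def atLeast0LessThan)
  finally show ?thesis .
qed

lemma top_sketch_adj_norm_le:
  assumes f: "f \<in> carrier_vec p" and f_unit: "f \<bullet> f = 1"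
  shows "top_sketch_adj f \<bullet> top_sketch_adj f \<le> 1 + \<beta>"
proof (rule power2_le_mult_imp_le)
  let ?z = "top_sketch_adj f"
  have "(?z \<bullet> ?z)^2 = (f \<bullet> top_sketch ?z)^2" using scalar_prod_top_sketch[OF _ f] by simp
  also have "\<dots> \<le> (f \<bullet> f) * (top_sketch ?z \<bullet> top_sketch ?z)"
    by (rule scalar_prod_sq_le[OF f top_sketch_carrier])
  also have "\<dots> \<le> (1 + \<beta>) * (?z \<bullet> ?z)" using f_unit top_sketch_norm_le[of ?z] by simp
  finally show "(?z \<bullet> ?z)^2 \<le> (1 + \<beta>) * (?z \<bullet> ?z)" .
qed (use \<beta>_pos in simp)

lemma S_top_sketch_norm_ge:
  assumes y: "y \<in> carrier_vec k"
  shows "(1 - \<beta>) * ((M *\<^sub>v top_pre y) \<bullet> (M *\<^sub>v top_pre y)) - \<beta> * b * (y \<bullet> y)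
    \<le> (S *\<^sub>v top_sketch y) \<bullet> (S *\<^sub>v top_sketch y)"
proof -
  define u where "u = M *\<^sub>v top_pre y"
  define v where "v = E *\<^sub>v top_pre y"
  have u: "u \<in> carrier_vec m" and v: "v \<in> carrier_vec m"
    unfolding u_def v_def using M_carrier E_carrier by auto
  have "v \<bullet> v \<le> \<tau>^2 * ((y \<bullet> y) / b)"
    unfolding v_def using E_mult_vec_sq[OF top_pre_carrier, of y] top_pre_norm_le[OF y]
    by (meson mult_left_mono order_trans zero_le_power2)
  also have "\<dots> = \<beta> * (\<beta> * b * (y \<bullet> y))"
    using b_pos unfolding \<beta>_def by (simp add: power2_eq_square field_simps)
  finally have vv: "v \<bullet> v / \<beta> \<le> \<beta> * b * (y \<bullet> y)" using \<beta>_pos by (simp add: field_simps)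
  have "2 * \<bar>u \<bullet> v\<bar> \<le> \<beta> * (u \<bullet> u) + (v \<bullet> v) / \<beta>"
    by (rule scalar_prod_abs_le_amgm[OF u v \<beta>_pos])
  moreover have "(S *\<^sub>v top_sketch y) \<bullet> (S *\<^sub>v top_sketch y) = u \<bullet> u - 2 * (u \<bullet> v) + v \<bullet> v"
    unfolding S_top_sketch u_def[symmetric] v_def[symmetric] by (rule scalar_prod_diff_self[OF u v])
  moreover have "(1 - \<beta>) * (u \<bullet> u) = u \<bullet> u - \<beta> * (u \<bullet> u)" by (simp add: algebra_simps)
  ultimately show ?thesis
    unfolding u_def[symmetric] using vv scalar_prod_self_nonneg[of v] by (simp add: abs_le_iff)
qed

lemma Q_quad_form_top_sketch_ge:
  assumes y: "y \<in> carrier_vec k"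
  shows "(1 - \<beta>) * ((M *\<^sub>v top_pre y) \<bullet> (M *\<^sub>v top_pre y)) - \<tau> * (2 + \<beta>) * (y \<bullet> y)
    \<le> top_sketch y \<bullet> (Q *\<^sub>v top_sketch y)"
proof -
  have "\<tau> * (top_sketch y \<bullet> top_sketch y) \<le> \<tau> * ((1 + \<beta>) * (y \<bullet> y))"
    using top_sketch_norm_le[OF y] \<tau>_pos by simp
  moreover have "\<tau> * (2 + \<beta>) * (y \<bullet> y) = \<beta> * b * (y \<bullet> y) + \<tau> * ((1 + \<beta>) * (y \<bullet> y))"
    unfolding \<beta>_mult_b by (simp add: algebra_simps)
  ultimately show ?thesis
    using S_top_sketch_norm_ge[OF y] Q_quad_form_ge[OF top_sketch_carrier, of y] by linarith
qed


lemma col_Vf_carrier [simp]: "col Vf l \<in> carrier_vec p"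
  using Vf_carrier by auto

lemma s_sq_mono: "a \<le> c \<Longrightarrow> c < p \<Longrightarrow> (s c)^2 \<le> (s a)^2"
  using s_dec s_nonneg by (intro power_mono) auto

text \<open>Courant--Fischer: some unit direction of the \<open>k\<close>-dimensional space spanned by the
  vectors \<open>top_sketch y\<close> is orthogonal to the first \<open>k - 1\<close> right singular vectors of \<open>W\<close>.\<close>
lemma last_top_sv_sq_lower: "b * (1 - 3 * \<beta> - \<beta>^2) \<le> (s (k - 1))^2 * (1 + \<beta>)"
proof -
  obtain y where y: "y \<in> carrier_vec k" "y \<noteq> 0\<^sub>v k"
    and orth: "\<forall>l<k - 1. top_sketch_adj (col Vf l) \<bullet> y = 0"
    using exists_nonzero_orthogonal[OF k_pos, of "\<lambda>l. top_sketch_adj (col Vf l)"] by auto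
  define x where "x = top_sketch y"
  have x: "x \<in> carrier_vec p" unfolding x_def by simp
  have yy: "0 < y \<bullet> y" by (rule scalar_prod_self_pos[OF y])
  have "x \<bullet> (Q *\<^sub>v x) \<le> (\<Sum>l<p. (s (k - 1))^2 * (col Vf l \<bullet> x)^2)"
    unfolding Q_quad_form[OF x]
  proof (rule sum_mono)
    fix l assume l: "l \<in> {..<p}"
    show "(s l)^2 * (col Vf l \<bullet> x)^2 \<le> (s (k - 1))^2 * (col Vf l \<bullet> x)^2"
    proof (cases "l < k - 1")
      case True
      thus ?thesis using orth scalar_prod_top_sketch[OF y(1) col_Vf_carrier] unfolding x_def by simp
    next
      case False
      thus ?thesis using l s_sq_mono[of "k - 1" l] by (intro mult_right_mono) auto
    qed
  qed
  also have "\<dots> = (s (k - 1))^2 * (x \<bullet> x)"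
    using orthogonal_sum_col_scalar_prod_sq[OF Vf_carrier Vf_orth x] by (simp flip: sum_distrib_left)
  also have "\<dots> \<le> (s (k - 1))^2 * ((1 + \<beta>) * (y \<bullet> y))"
    unfolding x_def by (intro mult_left_mono top_sketch_norm_le[OF y(1)]) simp
  finally have upper: "x \<bullet> (Q *\<^sub>v x) \<le> (s (k - 1))^2 * (1 + \<beta>) * (y \<bullet> y)" by simp
  have "(1 - \<beta>) * (b * (y \<bullet> y)) \<le> (1 - \<beta>) * ((M *\<^sub>v top_pre y) \<bullet> (M *\<^sub>v top_pre y))"
    using M_top_pre_norm_ge[OF y(1)] \<beta>_le by (intro mult_left_mono) auto
  hence "(1 - \<beta>) * (b * (y \<bullet> y)) - \<tau> * (2 + \<beta>) * (y \<bullet> y) \<le> x \<bullet> (Q *\<^sub>v x)"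
    using Q_quad_form_top_sketch_ge[OF y(1)] unfolding x_def by linarith
  moreover have "(1 - \<beta>) * (b * (y \<bullet> y)) - \<tau> * (2 + \<beta>) * (y \<bullet> y) = b * (1 - 3 * \<beta> - \<beta>^2) * (y \<bullet> y)"
  proof -
    have "\<tau> * (2 + \<beta>) * (y \<bullet> y) = \<beta> * b * (2 + \<beta>) * (y \<bullet> y)" by (simp add: \<beta>_mult_b)
    thus ?thesis by (simp add: power2_eq_square algebra_simps)
  qed
  ultimately have "(b * (1 - 3 * \<beta> - \<beta>^2)) * (y \<bullet> y) \<le> ((s (k - 1))^2 * (1 + \<beta>)) * (y \<bullet> y)"
    using upper by linarith
  thus ?thesis using yy by (rule mult_right_le_imp_le)
qed

lemma last_top_sv_sq_ge: "b \<le> 2 * (s (k - 1))^2"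
proof -
  have "\<beta>^2 \<le> \<beta> / 8" using \<beta>_pos \<beta>_le by (simp add: power2_eq_square mult_left_le)
  hence "1 + \<beta> \<le> 2 * (1 - 3 * \<beta> - \<beta>^2)" using \<beta>_le by (simp add: algebra_simps)
  hence "b * (1 + \<beta>) \<le> 2 * (b * (1 - 3 * \<beta> - \<beta>^2))" using b_pos by (simp add: mult_left_mono)
  hence "b * (1 + \<beta>) \<le> (2 * (s (k - 1))^2) * (1 + \<beta>)" using last_top_sv_sq_lower by simp
  thus ?thesis using \<beta>_pos by (simp add: mult_le_cancel_right)
qed

text \<open>Ky Fan: the vectors \<open>top_sketch e\<^sub>a\<close>, \<open>a < k\<close>, are nearly orthonormal, so their total
  \<open>Q\<close>-energy is at most about \<open>\<Sum>\<^sub>l\<^sub><\<^sub>k s\<^sub>l\<^sup>2\<close>.\<close>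
lemma ky_fan_top_sv_sq:
  "(1 - \<beta>) * (\<Sum>a<k. (sA a)^2) - real k * \<tau> * (2 + \<beta>) \<le> (1 + \<beta>) * (\<Sum>l<k. (s l)^2)"
proof -
  define x where "x = (\<lambda>a. top_sketch (unit_vec k a))"
  define c where "c = (\<lambda>l. top_sketch_adj (col Vf l) \<bullet> top_sketch_adj (col Vf l))"
  have c_eq: "c l = (\<Sum>a<k. (col Vf l \<bullet> x a)^2)" for l
    unfolding c_def x_def scalar_prod_self_eq_sum_sq
    by (auto simp: scalar_prod_top_sketch intro!: sum.cong)
  have c_bounds: "\<forall>l<p. 0 \<le> c l \<and> c l \<le> 1 + \<beta>"
    unfolding c_def using top_sketch_adj_norm_le orthonormal_col_norm[OF Vf_carrier Vf_orth]
    by (auto simp: scalar_prod_self_nonneg)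
  have "(\<Sum>l<p. c l) = (\<Sum>a<k. x a \<bullet> x a)"
    unfolding c_eq x_def
    by (subst sum.swap) (simp add: orthogonal_sum_col_scalar_prod_sq[OF Vf_carrier Vf_orth])
  also have "\<dots> \<le> (\<Sum>a<k. 1 + \<beta>)"
  proof (rule sum_mono)
    fix a assume "a \<in> {..<k}"
    thus "x a \<bullet> x a \<le> 1 + \<beta>"
      using top_sketch_norm_le[OF unit_vec_carrier, of a] scalar_prod_left_unit[OF unit_vec_carrier, of a k a]
      unfolding x_def by simp
  qed
  finally have c_sum: "(\<Sum>l<p. c l) \<le> real k * (1 + \<beta>)" by simp
  have "(1 - \<beta>) * (\<Sum>a<k. (sA a)^2) - real k * \<tau> * (2 + \<beta>)
      = (\<Sum>a<k. (1 - \<beta>) * (sA a)^2 - \<tau> * (2 + \<beta>))"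
    by (simp add: sum_subtractf sum_distrib_left)
  also have "\<dots> \<le> (\<Sum>a<k. x a \<bullet> (Q *\<^sub>v x a))"
  proof (rule sum_mono)
    fix a assume "a \<in> {..<k}"
    hence "(M *\<^sub>v top_pre (unit_vec k a)) \<bullet> (M *\<^sub>v top_pre (unit_vec k a)) = (sA a)^2"
      unfolding M_top_pre_norm[OF unit_vec_carrier] by (intro sum_unit_vec_sq) simp
    moreover have "unit_vec k a \<bullet> unit_vec k a = (1::real)"
      using \<open>a \<in> {..<k}\<close> scalar_prod_left_unit[OF unit_vec_carrier, of a k a] by simp
    ultimately show "(1 - \<beta>) * (sA a)^2 - \<tau> * (2 + \<beta>) \<le> x a \<bullet> (Q *\<^sub>v x a)"
      using Q_quad_form_top_sketch_ge[OF unit_vec_carrier, of a] unfolding x_def by simp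
  qed
  also have "\<dots> = (\<Sum>l<p. (s l)^2 * c l)"
    unfolding x_def Q_quad_form[OF top_sketch_carrier] c_eq
    by (subst sum.swap) (simp add: x_def sum_distrib_left)
  also have "\<dots> \<le> (1 + \<beta>) * (\<Sum>l<k. (s l)^2)"
    using sum_mult_le_top_sum[OF k_le_p k_pos, of "\<lambda>l. (s l)^2" c "1 + \<beta>"] s_sq_mono c_bounds c_sum
    by auto
  finally show ?thesis .
qed


lemma last_top_sv_pos: "0 < s (k - 1)"
proof -
  have "s (k - 1) \<noteq> 0" using last_top_sv_sq_ge b_pos by auto
  moreover have "0 \<le> s (k - 1)" using s_nonneg k_pos k_le_p by simp
  ultimately show ?thesis by simp
qed

lemma top_sv_ge: "l < k \<Longrightarrow> s (k - 1) \<le> s l"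
  using s_dec k_le_p by simp

lemma top_sv_pos: "l < k \<Longrightarrow> 0 < s l"
  using top_sv_ge last_top_sv_pos by (meson less_le_trans)

definition "\<eta> = \<tau> / (s (k - 1))^2"

lemma \<eta>_nonneg: "0 \<le> \<eta>"
  unfolding \<eta>_def using \<tau>_pos by simp

lemma \<eta>_le: "\<eta> \<le> 2 * \<beta>"
proof -
  have "\<tau> * b \<le> \<tau> * (2 * (s (k - 1))^2)" using last_top_sv_sq_ge \<tau>_pos by simp
  thus ?thesis
    unfolding \<eta>_def \<beta>_def using b_pos last_top_sv_pos by (simp add: field_simps)
qed

definition "Vtop = mat p k (\<lambda>(a,c). Vf $$ (a,c))"
definition "Uhat = S * Vtop * mat_diag k (\<lambda>l. 1 / s l)"

definition "right_coords y = vec p (\<lambda>l. if l < k then y $ l / s l else 0)"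
definition "right_pre y = Vf *\<^sub>v right_coords y"

lemma right_pre_carrier [simp]: "right_pre y \<in> carrier_vec p"
  unfolding right_pre_def right_coords_def using Vf_carrier by simp

lemma Vtop_carrier: "Vtop \<in> carrier_mat p k"
  unfolding Vtop_def by simp

lemma Uhat_carrier: "Uhat \<in> carrier_mat m k"
  unfolding Uhat_def using mult_carrier_mat[OF mult_carrier_mat[OF S_carrier Vtop_carrier] mat_diag_dim] .

lemma Uhat_mult_vec:
  assumes y: "y \<in> carrier_vec k"
  shows "Uhat *\<^sub>v y = S *\<^sub>v right_pre y"
proof -
  have "Vtop *\<^sub>v (mat_diag k (\<lambda>l. 1 / s l) *\<^sub>v y) = right_pre y"
    unfolding right_pre_def right_coords_def Vtop_def mat_diag_mult_vec[OF y]
  proof (rule eq_vecI)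
    fix i assume "i < dim_vec (Vf *\<^sub>v vec p (\<lambda>l. if l < k then y $ l / s l else 0))"
    hence i: "i < p" using Vf_carrier by simp
    have "(\<Sum>j<k. Vf $$ (i,j) * (1 / s j * y $ j)) = (\<Sum>j<p. if j < k then Vf $$ (i,j) * (y $ j / s j) else 0)"
      by (simp add: sum_if_less_eq[OF k_le_p])
    thus "(mat p k (\<lambda>(a,c). Vf $$ (a,c)) *\<^sub>v vec k (\<lambda>i. 1 / s i * y $ i)) $ i
        = (Vf *\<^sub>v vec p (\<lambda>l. if l < k then y $ l / s l else 0)) $ i"
      using i Vf_carrier k_le_p
      by (auto simp: scalar_prod_def atLeast0LessThan intro!: sum.cong)
  qed (use Vf_carrier in simp)
  moreover have "Uhat *\<^sub>v y = S *\<^sub>v (Vtop *\<^sub>v (mat_diag k (\<lambda>l. 1 / s l) *\<^sub>v y))"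
    unfolding Uhat_def using S_carrier Vtop_carrier y
      assoc_mult_mat_vec[OF S_carrier Vtop_carrier mult_mat_vec_carrier[OF mat_diag_dim y]]
    by (simp add: assoc_mult_mat_vec[of _ m k _ k])
  ultimately show ?thesis by simp
qed

lemma right_pre_norm:
  assumes y: "y \<in> carrier_vec k"
  shows "right_pre y \<bullet> right_pre y = (\<Sum>l<k. (y $ l)^2 / (s l)^2)"
proof -
  have "right_pre y \<bullet> right_pre y = right_coords y \<bullet> right_coords y"
    unfolding right_pre_def by (rule orthonormal_mult_vec_scalar_prod[OF Vf_carrier Vf_orth])
      (auto simp: right_coords_def)
  also have "\<dots> = (\<Sum>l<p. if l < k then (y $ l)^2 / (s l)^2 else 0)"
    unfolding scalar_prod_self_eq_sum_sq right_coords_def by (auto intro!: sum.cong simp: power_divide)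
  finally show ?thesis by (simp add: sum_if_less_eq[OF k_le_p])
qed

lemma right_pre_norm_le:
  assumes y: "y \<in> carrier_vec k"
  shows "right_pre y \<bullet> right_pre y \<le> (y \<bullet> y) / (s (k - 1))^2"
proof -
  have "(\<Sum>l<k. (y $ l)^2 / (s l)^2) \<le> (\<Sum>l<k. (y $ l)^2 / (s (k - 1))^2)"
    using top_sv_ge last_top_sv_pos by (intro sum_mono frac_le) (auto intro: power_mono)
  thus ?thesis
    unfolding right_pre_norm[OF y] using y by (simp add: scalar_prod_self_eq_sum_sq sum_divide_distrib)
qed

lemma Q_quad_form_right_pre:
  assumes y: "y \<in> carrier_vec k"
  shows "right_pre y \<bullet> (Q *\<^sub>v right_pre y) = y \<bullet> y"
proof -
  have "right_pre y \<bullet> (Q *\<^sub>v right_pre y) = (\<Sum>l<p. (s l)^2 * (right_coords y $ l)^2)"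
    unfolding Q_eq right_pre_def
    by (rule sandwich_quad_form_orthonormal[OF Vf_carrier Vf_orth]) (simp add: right_coords_def)
  also have "\<dots> = (\<Sum>l<p. if l < k then (y $ l)^2 else 0)"
    unfolding right_coords_def using top_sv_pos[THEN less_imp_neq, THEN not_sym]
    by (intro sum.cong) (auto simp: power_divide)
  also have "\<dots> = y \<bullet> y" using y by (simp add: sum_if_less_eq[OF k_le_p] scalar_prod_self_eq_sum_sq)
  finally show ?thesis .
qed

lemma Uhat_near_isometry:
  assumes y: "y \<in> carrier_vec k"
  shows "(Uhat *\<^sub>v y) \<bullet> (Uhat *\<^sub>v y) \<le> (1 + \<eta>) * (y \<bullet> y)"
proof -
  let ?g = "right_pre y"
  have "(Uhat *\<^sub>v y) \<bullet> (Uhat *\<^sub>v y) = ?g \<bullet> (Q *\<^sub>v ?g) + ?g \<bullet> (D *\<^sub>v ?g)"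
    unfolding Uhat_mult_vec[OF y] quad_form_gram[OF S_carrier right_pre_carrier, symmetric]
    using quad_form_minus[OF _ Q_carrier right_pre_carrier, of "transpose_mat S * S" y] S_carrier
    by simp
  also have "\<dots> \<le> y \<bullet> y + \<tau> * ((y \<bullet> y) / (s (k - 1))^2)"
    using Q_quad_form_right_pre[OF y] D_quad_form[OF right_pre_carrier, of y]
      mult_left_mono[OF right_pre_norm_le[OF y], of \<tau>] \<tau>_pos
    by (simp add: abs_le_iff)
  finally show ?thesis unfolding \<eta>_def by (simp add: algebra_simps)
qed

lemma Q_right_pre_unit_vec:
  assumes l: "l < k"
  shows "Q *\<^sub>v right_pre (unit_vec k l) = (s l)^2 \<cdot>\<^sub>v right_pre (unit_vec k l)"
proof -
  let ?c = "right_coords (unit_vec k l)"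
  have "Q *\<^sub>v right_pre (unit_vec k l) = Vf *\<^sub>v vec p (\<lambda>a. (s a)^2 * ?c $ a)"
    unfolding Q_eq right_pre_def
    by (rule sandwich_mult_vec_orthonormal[OF Vf_carrier Vf_orth]) (simp add: right_coords_def)
  also have "vec p (\<lambda>a. (s a)^2 * ?c $ a) = (s l)^2 \<cdot>\<^sub>v ?c"
    unfolding right_coords_def using l k_le_p by (intro eq_vecI) auto
  also have "Vf *\<^sub>v ((s l)^2 \<cdot>\<^sub>v ?c) = (s l)^2 \<cdot>\<^sub>v right_pre (unit_vec k l)"
    unfolding right_pre_def using Vf_carrier by (intro mult_mat_vec) (auto simp: right_coords_def)
  finally show ?thesis .
qed

lemma right_pre_unit_vec_norm:
  "l < k \<Longrightarrow> right_pre (unit_vec k l) \<bullet> right_pre (unit_vec k l) = 1 / (s l)^2"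
  unfolding right_pre_norm[OF unit_vec_carrier]
  using sum_unit_vec_sq[of l k "\<lambda>a. 1 / (s a)^2"] by simp

lemma S_transpose_Uhat_col:
  assumes l: "l < k"
  shows "transpose_mat S *\<^sub>v col Uhat l
    = Q *\<^sub>v right_pre (unit_vec k l) + D *\<^sub>v right_pre (unit_vec k l)"
proof -
  let ?g = "right_pre (unit_vec k l)"
  have "transpose_mat S *\<^sub>v col Uhat l = (transpose_mat S * S) *\<^sub>v ?g"
    unfolding col_eq_mult_unit_vec[OF Uhat_carrier l] Uhat_mult_vec[OF unit_vec_carrier]
    using S_carrier by (simp add: assoc_mult_mat_vec[of _ p m _ p])
  moreover have "D *\<^sub>v ?g = (transpose_mat S * S) *\<^sub>v ?g - Q *\<^sub>v ?g"
    by (rule minus_mult_distrib_mat_vec) (use S_carrier Q_carrier in auto)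
  ultimately show ?thesis using S_carrier Q_carrier by (intro eq_vecI) auto
qed

lemma S_transpose_Uhat_col_norm_ge:
  assumes l: "l < k"
  shows "(s l)^2 - 2 * \<tau> \<le> (transpose_mat S *\<^sub>v col Uhat l) \<bullet> (transpose_mat S *\<^sub>v col Uhat l)"
proof -
  define g where "g = right_pre (unit_vec k l)"
  have g: "g \<in> carrier_vec p" unfolding g_def by simp
  have sl: "0 < s l" using top_sv_pos[OF l] .
  have Qg: "Q *\<^sub>v g = (s l)^2 \<cdot>\<^sub>v g" and gg: "g \<bullet> g = 1 / (s l)^2"
    unfolding g_def using Q_right_pre_unit_vec[OF l] right_pre_unit_vec_norm[OF l] by auto
  have Dg: "D *\<^sub>v g \<in> carrier_vec p" and Qg_carrier: "Q *\<^sub>v g \<in> carrier_vec p"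
    using D_carrier Q_carrier g by auto
  have "(Q *\<^sub>v g) \<bullet> (Q *\<^sub>v g) = (s l)^2"
    unfolding Qg using g gg sl by (simp add: power2_eq_square field_simps)
  moreover have "\<bar>(Q *\<^sub>v g) \<bullet> (D *\<^sub>v g)\<bar> \<le> \<tau>"
    using D_quad_form[OF g] unfolding Qg using g Dg gg sl by (simp add: abs_mult field_simps)
  ultimately show ?thesis
    unfolding S_transpose_Uhat_col[OF l, folded g_def] scalar_prod_add_self[OF Qg_carrier Dg]
    using scalar_prod_self_nonneg[of "D *\<^sub>v g"] by (simp add: abs_le_iff)
qed

lemma M_quad_form_Uhat_col_ge:
  assumes l: "l < k"
  shows "(s l)^2 - \<tau> * (3 + \<eta>) \<le> col Uhat l \<bullet> (M *\<^sub>v col Uhat l)"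
proof -
  let ?h = "col Uhat l"
  have h: "?h \<in> carrier_vec m" using Uhat_carrier l by simp
  have "?h \<bullet> ?h \<le> 1 + \<eta>"
    using Uhat_near_isometry[OF unit_vec_carrier, of l] col_eq_mult_unit_vec[OF Uhat_carrier l]
      scalar_prod_left_unit[OF unit_vec_carrier, of l k l] l
    by simp
  hence "\<tau> * (?h \<bullet> ?h) \<le> \<tau> * (1 + \<eta>)" using \<tau>_pos by simp
  thus ?thesis
    using quad_form_minus[OF M_carrier _ h, of "S * transpose_mat S"] S_carrier
      quad_form_gram_transpose[OF S_carrier h] E_quad_form[OF h] S_transpose_Uhat_col_norm_ge[OF l]
    by (simp add: abs_le_iff algebra_simps)
qed

lemma Uhat_transpose_A_fro_norm_ge:
  "(\<Sum>l<k. (s l)^2) - real k * \<tau> * (3 + \<eta>) \<le> (fro_norm (transpose_mat Uhat * A))^2"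
proof -
  have "(\<Sum>l<k. (s l)^2) - real k * \<tau> * (3 + \<eta>) = (\<Sum>l<k. (s l)^2 - \<tau> * (3 + \<eta>))"
    by (simp add: sum_subtractf)
  also have "\<dots> \<le> (\<Sum>l<k. col Uhat l \<bullet> (M *\<^sub>v col Uhat l))"
    by (intro sum_mono M_quad_form_Uhat_col_ge) simp
  also have "\<dots> = (fro_norm (transpose_mat Uhat * A))^2"
    by (rule fro_norm_sq_transpose_mult[OF Uhat_carrier A_carrier, symmetric])
  finally show ?thesis .
qed


lemma sum_top_sA_sq_le: "(\<Sum>l<k. (sA l)^2) \<le> (fro_norm A)^2"
  unfolding svd_fro_norm_sq[OF A_carrier UA_carrier VA_carrier UA_orth VA_orth A_svd]
    sum_lessThan_split[OF k_le_r]
  by (simp add: sum_nonneg)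

lemma k_tau_le: "real k * \<tau> \<le> \<beta> * (\<Sum>l<k. (sA l)^2)"
proof -
  have "real k * b \<le> (\<Sum>l<k. (sA l)^2)"
    using sum_mono[of "{..<k}" "\<lambda>_. b" "\<lambda>l. (sA l)^2"] sA_sq_ge k_le_r by auto
  hence "\<beta> * (real k * b) \<le> \<beta> * (\<Sum>l<k. (sA l)^2)" using \<beta>_pos by (simp add: mult_left_mono)
  moreover have "\<beta> * (real k * b) = real k * \<tau>" by (metis \<beta>_mult_b mult.left_commute)
  ultimately show ?thesis by simp
qed

lemma sum_top_sv_sq_ge:
  "(1 - 2 * \<beta>) * (\<Sum>l<k. (sA l)^2) - real k * \<tau> * (2 + \<beta>) \<le> (\<Sum>l<k. (s l)^2)"
proof (rule mult_left_le_imp_le)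
  let ?Sa = "\<Sum>l<k. (sA l)^2" and ?\<kappa> = "real k * \<tau>"
  have "(1 - \<beta>) * ?Sa - ?\<kappa> * (2 + \<beta>) - (1 + \<beta>) * ((1 - 2 * \<beta>) * ?Sa - ?\<kappa> * (2 + \<beta>))
      = 2 * \<beta> * (\<beta> * ?Sa) + \<beta> * (?\<kappa> * (2 + \<beta>))"
    by (simp add: algebra_simps)
  moreover have "0 \<le> \<beta> * (\<beta> * ?Sa)" "0 \<le> \<beta> * (?\<kappa> * (2 + \<beta>))"
    using \<beta>_pos \<tau>_pos by (simp_all add: sum_nonneg)
  ultimately show "(1 + \<beta>) * ((1 - 2 * \<beta>) * ?Sa - ?\<kappa> * (2 + \<beta>)) \<le> (1 + \<beta>) * (\<Sum>l<k. (s l)^2)"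
    using ky_fan_top_sv_sq by linarith
qed (use \<beta>_pos in simp)

lemma residual_fro_norm_le:
  "(fro_norm (A - Uhat * transpose_mat Uhat * A))^2
    \<le> (fro_norm A)^2 - (\<Sum>l<k. (sA l)^2) + 10 * \<beta> * (fro_norm A)^2"
proof -
  define F where "F = (fro_norm A)^2"
  define Sa where "Sa = (\<Sum>l<k. (sA l)^2)"
  define Ss where "Ss = (\<Sum>l<k. (s l)^2)"
  define T where "T = (fro_norm (transpose_mat Uhat * A))^2"
  define \<kappa> where "\<kappa> = real k * \<tau>"
  have residual: "(fro_norm (A - Uhat * transpose_mat Uhat * A))^2 \<le> F - (1 - \<eta>) * T"
    and T_le: "T \<le> (1 + \<eta>) * F"
    using near_isometry_proj_fro_norm[OF Uhat_carrier \<eta>_nonneg Uhat_near_isometry A_carrier]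
    unfolding F_def T_def by auto
  have T_ge: "Ss - \<kappa> * (3 + \<eta>) \<le> T"
    using Uhat_transpose_A_fro_norm_ge unfolding Ss_def T_def \<kappa>_def by simp
  have Ss_ge: "(1 - 2 * \<beta>) * Sa - \<kappa> * (2 + \<beta>) \<le> Ss"
    using sum_top_sv_sq_ge unfolding Sa_def Ss_def \<kappa>_def .
  have Sa_le: "Sa \<le> F" using sum_top_sA_sq_le unfolding Sa_def F_def .
  have \<kappa>_nonneg: "0 \<le> \<kappa>" unfolding \<kappa>_def using \<tau>_pos by simp
  have "\<beta> * Sa \<le> \<beta> * F" by (rule mult_left_mono[OF Sa_le less_imp_le[OF \<beta>_pos]])
  hence \<kappa>_le: "\<kappa> \<le> \<beta> * F" using k_tau_le unfolding \<kappa>_def Sa_def by linarith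
  have F_nonneg: "0 \<le> F" unfolding F_def by simp
  have "\<eta> * T \<le> \<eta> * ((1 + \<eta>) * F)" by (rule mult_left_mono[OF T_le \<eta>_nonneg])
  also have "\<dots> \<le> (2 * \<beta>) * ((1 + 2 * \<beta>) * F)"
    using \<eta>_le \<eta>_nonneg F_nonneg \<beta>_pos by (intro mult_mono mult_right_mono) auto
  also have "\<dots> = (2 + 4 * \<beta>) * (\<beta> * F)" by (simp add: algebra_simps)
  also have "\<dots> \<le> (5 / 2) * (\<beta> * F)"
    using \<beta>_le \<beta>_pos F_nonneg by (intro mult_right_mono) auto
  finally have \<eta>T: "\<eta> * T \<le> (5 / 2) * (\<beta> * F)" .
  have "\<kappa> * (5 + \<beta> + \<eta>) \<le> (\<beta> * F) * (5 + 3 * \<beta>)"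
    using \<kappa>_le \<kappa>_nonneg \<eta>_le \<eta>_nonneg \<beta>_pos by (intro mult_mono) auto
  also have "\<dots> \<le> (\<beta> * F) * (11 / 2)"
    using \<beta>_le \<beta>_pos F_nonneg by (intro mult_left_mono) auto
  finally have \<kappa>\<eta>: "\<kappa> * (5 + \<beta> + \<eta>) \<le> (11 / 2) * (\<beta> * F)" by simp
  have "2 * \<beta> * Sa \<le> 2 * (\<beta> * F)" using Sa_le \<beta>_pos by simp
  moreover have "(1 - 2 * \<beta>) * Sa = Sa - 2 * \<beta> * Sa" "\<kappa> * (2 + \<beta>) + \<kappa> * (3 + \<eta>) = \<kappa> * (5 + \<beta> + \<eta>)"
    "(1 - \<eta>) * T = T - \<eta> * T" "10 * \<beta> * F = 10 * (\<beta> * F)"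
    by (simp_all add: algebra_simps)
  ultimately show ?thesis
    using residual T_ge Ss_ge \<eta>T \<kappa>\<eta> unfolding F_def[symmetric] Sa_def[symmetric] by linarith
qed

end

section \<open>Sampling and parameters\<close>

lemma fro_norm_samp_cols:
  fixes A :: "real mat"
  assumes A: "A \<in> carrier_mat m n" and p: "0 < p" and j: "\<forall>t<p. 0 < col_prob A (j t)"
  shows "(fro_norm (samp_cols A p j))^2 = (fro_norm A)^2"
proof -
  define F where "F = (fro_norm A)^2"
  have col_sum: "(\<Sum>a<m. (samp_cols A p j $$ (a,t))^2) = F / real p" if t: "t < p" for t
  proof -
    define c where "c = (\<Sum>a<m. (A $$ (a, j t))^2)"
    have P: "col_prob A (j t) = c / F" unfolding col_prob_def c_def F_def using A by simp
    have "0 < c / F" using j t unfolding P[symmetric] by blast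
    hence cF: "c \<noteq> 0" "F \<noteq> 0" by auto
    have "0 \<le> real p * c / F"
      using \<open>0 < c / F\<close> by (metis less_imp_le mult_nonneg_nonneg of_nat_0_le_iff times_divide_eq_right)
    have "(\<Sum>a<m. (samp_cols A p j $$ (a,t))^2) = (\<Sum>a<m. (A $$ (a, j t))^2 / (real p * (c / F)))"
      using A t \<open>0 \<le> real p * c / F\<close> p unfolding samp_cols_def by (intro sum.cong) (auto simp: power_divide P)
    also have "\<dots> = F / real p" using cF p unfolding c_def[symmetric] sum_divide_distrib[symmetric]
      by (simp add: field_simps)
    finally show ?thesis .
  qed
  have "(fro_norm (samp_cols A p j))^2 = (\<Sum>t<p. \<Sum>a<m. (samp_cols A p j $$ (a,t))^2)"
    unfolding fro_norm_sq using A by (simp add: samp_cols_def sum.swap[of _ "{..<m}"])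
  also have "\<dots> = F" using col_sum p by simp
  finally show ?thesis unfolding F_def .
qed

lemma omega_le:
  fixes sp F \<sigma> \<epsilon> :: real
  assumes F: "0 \<le> F" and \<sigma>: "0 < \<sigma>" and \<epsilon>: "\<bar>\<epsilon>\<bar> \<le> 1"
  shows "sp^2 * \<epsilon>^2 / (196 * (F * (sp / \<sigma>) + sp)^2) \<le> 1 / 196"
proof -
  define X where "X = F * (sp / \<sigma>) + sp"
  have "X^2 = (F * (sp / \<sigma>))^2 + 2 * (F * (sp^2 / \<sigma>)) + sp^2"
    unfolding X_def using \<sigma> by (simp add: power2_eq_square field_simps)
  moreover have "0 \<le> F * (sp^2 / \<sigma>)" using F \<sigma> by simp
  moreover have "0 \<le> (F * (sp / \<sigma>))^2" by simp
  ultimately have X_ge: "sp^2 \<le> X^2" by linarith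
  have "\<epsilon>^2 \<le> 1" using \<epsilon> by (simp add: abs_square_le_1)
  show ?thesis
  proof (cases "X = 0")
    case False
    hence "sp^2 * \<epsilon>^2 \<le> X^2 * 1" using X_ge \<open>\<epsilon>^2 \<le> 1\<close> by (intro mult_mono) auto
    thus ?thesis using False unfolding X_def[symmetric] by (simp add: field_simps)
  qed (simp add: X_def)
qed

lemma theta_scaled_le:
  fixes \<theta> \<omega> sp \<sigma> F K :: real
  assumes \<theta>: "0 < \<theta>" and \<sigma>: "0 < \<sigma>" and \<omega>: "0 \<le> \<omega>"
    and \<theta>_le: "\<theta> \<le> \<omega> * sp^2 / (K * (sp / \<sigma>)^2 * F)"
  shows "\<theta> * F * K \<le> \<omega> * \<sigma>^2"
proof -
  define den where "den = K * (sp / \<sigma>)^2 * F"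
  have "0 < \<omega> * sp^2 / den" using \<theta> \<theta>_le unfolding den_def by linarith
  hence den: "0 < den"
    using mult_nonneg_nonneg[OF \<omega> zero_le_power2[of sp]] by (simp add: zero_less_divide_iff)
  hence sp: "0 < sp^2" unfolding den_def by auto
  have "\<theta> * den \<le> \<omega> * sp^2" using \<theta>_le den unfolding den_def[symmetric] by (simp add: field_simps)
  hence "(\<theta> * F * K) * sp^2 \<le> (\<omega> * \<sigma>^2) * sp^2"
    unfolding den_def using \<sigma> by (simp add: power_divide field_simps)
  thus ?thesis using sp by simp
qed

lemma sample_size_ge:
  fixes \<theta> \<delta> :: real
  assumes budget: "\<theta> * (4 * real k + 3) \<le> 1" and \<theta>: "0 < \<theta>" and \<delta>: "0 < \<delta>" "\<delta> < 1"
  shows "k \<le> nat \<lceil>1 / (\<theta>^2 * \<delta>)\<rceil>"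
proof -
  have "4 * (real k * \<theta>) + 3 * \<theta> \<le> 1" using budget by (simp add: algebra_simps)
  moreover have "0 \<le> real k * \<theta>" using \<theta> by simp
  ultimately have k\<theta>: "real k * \<theta> \<le> 1" and "\<theta> \<le> 1" using \<theta> by linarith+
  have "\<theta> * \<delta> \<le> 1" using \<open>\<theta> \<le> 1\<close> \<theta> \<delta> by (intro mult_le_one) auto
  hence "(real k * \<theta>) * (\<theta> * \<delta>) \<le> 1 * 1" using k\<theta> \<theta> \<delta> by (intro mult_mono) auto
  hence "real k * (\<theta>^2 * \<delta>) \<le> 1" by (simp add: power2_eq_square mult_ac)
  hence "real k \<le> 1 / (\<theta>^2 * \<delta>)" using \<theta> \<delta> by (simp add: le_divide_eq)
  hence "real k \<le> of_int \<lceil>1 / (\<theta>^2 * \<delta>)\<rceil>" using le_of_int_ceiling order_trans by blast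
  thus ?thesis by (simp add: le_nat_iff)
qed

lemma qisvd_parameter_bounds:
  fixes \<theta> \<omega> \<delta> \<epsilon> sp \<sigma> Fn :: real and k p :: nat
  assumes \<epsilon>: "0 < \<epsilon>" "\<epsilon> < 1" and \<delta>: "0 < \<delta>" "\<delta> < 1" and k: "1 \<le> k"
    and \<sigma>: "0 < \<sigma>" "\<sigma>^2 \<le> Fn^2" and Fn: "0 \<le> Fn"
    and \<omega>_def: "\<omega> = sp^2 * \<epsilon>^2 / (196 * (Fn * (sp / \<sigma>) + sp)^2)"
    and \<theta>: "0 < \<theta>" "\<theta> \<le> \<omega> * sp^2 / ((4 * real k + 3 + 2 * \<omega>) * (sp / \<sigma>)^2 * Fn^2)"
    and p: "p = nat \<lceil>1 / (\<theta>^2 * \<delta>)\<rceil>"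
  shows "8 * (\<theta> * Fn^2) \<le> \<sigma>^2" and "k \<le> p" and "10 * (\<theta> * Fn^2 / \<sigma>^2) < 5 * \<omega>"
proof -
  define F b where "F = Fn^2" and "b = \<sigma>^2"
  have b: "0 < b" "b \<le> F" unfolding F_def b_def using \<sigma> by auto
  have \<omega>: "0 \<le> \<omega>" "\<omega> \<le> 1 / 196"
    unfolding \<omega>_def using omega_le[OF Fn \<sigma>(1), of \<epsilon> sp] \<epsilon> by auto
  have scaled: "\<theta> * F * (4 * real k + 3 + 2 * \<omega>) \<le> \<omega> * b"
    unfolding F_def b_def by (rule theta_scaled_le[OF \<theta>(1) \<sigma>(1) \<omega>(1) \<theta>(2)])
  have \<theta>F: "0 < \<theta> * F" using \<theta> b by simp
  have "\<theta> * F * (4 * real k + 3) \<le> \<theta> * F * (4 * real k + 3 + 2 * \<omega>)"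
    using \<theta>F \<omega> by (intro mult_left_mono) auto
  hence scaled': "\<theta> * F * (4 * real k + 3) \<le> \<omega> * b" using scaled by linarith
  have "7 * (\<theta> * F) \<le> \<theta> * F * (4 * real k + 3)"
    using mult_left_mono[of 7 "4 * real k + 3" "\<theta> * F"] k \<theta>F by (simp add: mult.commute)
  hence seven: "7 * (\<theta> * F) \<le> \<omega> * b" using scaled' by linarith
  have "\<omega> * b \<le> b / 196" using \<omega> b by simp
  hence main: "\<theta> * F * (4 * real k + 3) \<le> b / 196" using scaled' by linarith
  show "8 * (\<theta> * Fn^2) \<le> \<sigma>^2"
    using seven \<open>\<omega> * b \<le> b / 196\<close> \<theta>F unfolding F_def b_def by linarith
  show "10 * (\<theta> * Fn^2 / \<sigma>^2) < 5 * \<omega>"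
    using seven \<theta>F b unfolding F_def[symmetric] b_def[symmetric] by (simp add: field_simps)
  have "\<theta> * (4 * real k + 3) * F = \<theta> * F * (4 * real k + 3)" by (simp add: mult_ac)
  hence "\<theta> * (4 * real k + 3) * F \<le> 1 * F" using main b by linarith
  moreover have "0 < F" using b by linarith
  ultimately have "\<theta> * (4 * real k + 3) \<le> 1" by (rule mult_right_le_imp_le)
  thus "k \<le> p" unfolding p using \<theta>(1) \<delta> by (rule sample_size_ge)
qed

theorem mainTheorem5:
  fixes A UA VA Vf :: "real mat" and m n r k p :: nat and sA s :: "nat \<Rightarrow> real"
    and eps delta theta \<omega> :: real and j i :: "nat \<Rightarrow> nat"
    and S W V Uhat Ak :: "real mat"
  assumes A_dim: "A \<in> carrier_mat m n" and A_nz: "A \<noteq> 0\<^sub>m m n"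
    \<comment> \<open>compact SVD  A = U_A Sigma_A V_A^T  of the rank-r matrix A\<close>
    and UA_dim: "UA \<in> carrier_mat m r" and VA_dim: "VA \<in> carrier_mat n r"
    and UA_orth: "transpose_mat UA * UA = 1\<^sub>m r"
    and VA_orth: "transpose_mat VA * VA = 1\<^sub>m r"
    and sA_pos: "\<forall>l<r. sA l > 0"
    and sA_dec: "\<forall>a b. a \<le> b \<longrightarrow> b < r \<longrightarrow> sA b \<le> sA a"
    and A_svd: "A = UA * mat_diag r sA * transpose_mat VA"
    and k_bds: "1 \<le> k" "k \<le> r"
    and eps: "0 < eps" "eps < 1" and delta: "0 < delta" "delta < 1"
    and omega_def: "\<omega> = (spec_norm A)^2 * eps^2 /
          (196 * (fro_norm A * cond_num A + spec_norm A)^2)"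
    and theta: "0 < theta"
       "theta \<le> \<omega> * (spec_norm A)^2 /
          ((4 * real k + 3 + 2 * \<omega>) * (cond_num A)^2 * (fro_norm A)^2)"
    and p_def: "p = nat \<lceil>1 / (theta^2 * delta)\<rceil>"
    \<comment> \<open>the sampled column indices (each sampled with positive probability)\<close>
    and j_range: "\<forall>t<p. j t < n \<and> col_prob A (j t) > 0"
    and S_def: "S = samp_cols A p j"
    \<comment> \<open>the sampled row indices (each sampled with positive probability)\<close>
    and i_range: "\<forall>t<p. i t < m \<and> row_prob S (i t) > 0"
    and W_def: "W = samp_rows S p i"
    \<comment> \<open>ordered orthonormal eigenbasis of W^T W: s are the singular values of W in
        nonincreasing order, columns of Vf the corresponding right singular vectors\<close>
    and Vf_dim: "Vf \<in> carrier_mat p p"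
    and Vf_orth: "transpose_mat Vf * Vf = 1\<^sub>m p"
    and s_nonneg: "\<forall>l<p. s l \<ge> 0"
    and s_dec: "\<forall>a b. a \<le> b \<longrightarrow> b < p \<longrightarrow> s b \<le> s a"
    and W_eig: "transpose_mat W * W = Vf * mat_diag p (\<lambda>l. (s l)^2) * transpose_mat Vf"
    and V_def: "V = mat p k (\<lambda>(a,b). Vf $$ (a,b))"
    and Uhat_def: "Uhat = S * V * mat_diag k (\<lambda>l. 1 / s l)"
    and Ak_def: "Ak = mat m n (\<lambda>(a,b). \<Sum>l<k. sA l * UA $$ (a,l) * VA $$ (b,l))"
    \<comment> \<open>events (E1) and (E2)\<close>
    and E1: "fro_norm (A * transpose_mat A - S * transpose_mat S) \<le> theta * (fro_norm A)^2"
    and E2: "fro_norm (transpose_mat S * S - transpose_mat W * W) \<le> theta * (fro_norm S)^2"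
  shows "(fro_norm (A - Uhat * transpose_mat Uhat * A))^2
           < (fro_norm (A - Ak))^2 + 5 * \<omega> * (fro_norm A)^2"
proof -
  define F where "F = (fro_norm A)^2"
  define b where "b = (sigma_min A)^2"
  have r: "0 < r" using k_bds by simp
  note svd = A_dim UA_dim VA_dim UA_orth VA_orth A_svd and sv = sA_pos sA_dec r
  have b_pos: "0 < b" and b_le: "\<forall>l<r. b \<le> (sA l)^2" and b_le_F: "b \<le> F"
    unfolding b_def F_def using sigma_min_pos[OF svd sv] sigma_min_sq_le[OF svd sv]
      sigma_min_sq_le_fro_norm_sq[OF svd sv] by auto
  note bounds = qisvd_parameter_bounds[OF eps delta k_bds(1) sigma_min_pos[OF svd sv]
      sigma_min_sq_le_fro_norm_sq[OF svd sv] fro_norm_nonneg omega_def[unfolded cond_num_def]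
      theta[unfolded cond_num_def] p_def, folded F_def b_def]
  have S_fro: "(fro_norm S)^2 = F"
    unfolding S_def F_def using fro_norm_samp_cols[OF A_dim] j_range bounds(2) k_bds by simp
  have \<theta>F: "0 < theta * F" using theta(1) b_pos b_le_F by simp
  have S_dim: "S \<in> carrier_mat m p" unfolding S_def samp_cols_def using A_dim by simp
  interpret sp: sketch_perturbation A UA VA S Vf "transpose_mat W * W" m n r k p sA s "theta * F" b
    by unfold_locales
      (use svd sA_pos b_le k_bds bounds(1,2) S_dim Vf_dim Vf_orth s_nonneg s_dec W_eig E1 E2 S_fro
        \<theta>F in \<open>simp_all add: F_def\<close>)
  have "Uhat = sp.Uhat" unfolding Uhat_def sp.Uhat_def V_def sp.Vtop_def ..
  moreover have "(fro_norm (A - Ak))^2 = F - (\<Sum>l<k. (sA l)^2)"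
    unfolding Ak_def svd_truncation_fro_norm_sq[OF svd k_bds(2)] F_def svd_fro_norm_sq[OF svd]
      sum_lessThan_split[OF k_bds(2)] by simp
  ultimately have "(fro_norm (A - Uhat * transpose_mat Uhat * A))^2
      \<le> (fro_norm (A - Ak))^2 + 10 * (theta * F / b) * F"
    using sp.residual_fro_norm_le[unfolded sp.\<beta>_def] unfolding F_def by simp
  also have "\<dots> < (fro_norm (A - Ak))^2 + 5 * \<omega> * F"
    using mult_strict_right_mono[OF bounds(3), of F] b_pos b_le_F by simp
  finally show ?thesis unfolding F_def .
qed

end
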